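(* The following congruences hold coefficientwise modulo $128$: $$\sum_{n\ge0}\overline{bt}(4n)q^n\equiv 32q\frac{f_2^{47}}{f_1^{50}f_4f_8^2}+56q\frac{f_2^{61}f_8^2}{f_1^{54}f_4^{15}}+\frac{f_2^{71}}{f_1^{58}f_4^{17}f_8^2},$$ $$\sum_{n\ge0}\overline{bt}(8n)q^n\equiv 32q\frac{f_2^{169}f_8^2}{f_1^{126}f_4^{51}}+16q\frac{f_2^{155}}{f_1^{122}f_4^{37}f_8^2}+\frac{f_2^{179}}{f_1^{130}f_4^{53}f_8^2},$$ $$\sum_{n\ge0}\overline{bt}(16n)q^n\equiv 96q\frac{f_2^{385}f_8^2}{f_1^{270}f_4^{123}}+\frac{f_2^{395}}{f_1^{274}f_4^{125}f_8^2},$$ $$\sum_{n\ge0}\overline{bt}(32n)q^n\equiv 96q\frac{f_2^{803}}{f_1^{554}f_4^{253}f_8^2}+96q\frac{f_2^{817}f_8^2}{f_1^{558}f_4^{267}}+\frac{f_2^{827}}{f_1^{562}f_4^{269}f_8^2}.$$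
   Context: For a positive integer $k$ let $f_k:=\prod_{m=1}^\infty(1-q^{mk})$, viewed as formal power series in $q$ with integer coefficients (quotients of such products with constant term $1$ are again integer power series). The function $\overline{bt}(n)$ is defined by $\sum_{n\ge0}\overline{bt}(n)q^n=\frac{f_4^3}{f_1^6f_2^3}$. A congruence $A\equiv B\pmod m$ between power series means all corresponding coefficients are congruent modulo $m$. *)

theory Defs
  imports "HOL-Computational_Algebra.Formal_Power_Series"
begin

text \<open>Power series are taken over the rationals so that quotients of the
products f_k (which have constant term 1) can be formed with the library's
fps inverse; all series involved have integer coefficients.\<close>

text \<open>f_k = prod_{m>=1} (1 - q^(mk)).  The n-th coefficient of the infinite
product equals the n-th coefficient of the finite product over m = 1..n
(for k >= 1 the factors with m > n are 1 + O(q^(n+1))).\<close>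
definition f :: "nat \<Rightarrow> rat fps" where
  "f k = Abs_fps (\<lambda>n. fps_nth (\<Prod>m\<in>{1..n}. 1 - fps_X ^ (m * k)) n)"

definition bt_gf :: "rat fps" where
  "bt_gf = f 4 ^ 3 / (f 1 ^ 6 * f 2 ^ 3)"

definition bt :: "nat \<Rightarrow> rat" where
  "bt n = fps_nth bt_gf n"

definition fps_cong :: "rat fps \<Rightarrow> rat fps \<Rightarrow> int \<Rightarrow> bool" where
  "fps_cong A B m \<longleftrightarrow> (\<forall>n. \<exists>c::int. fps_nth A n - fps_nth B n = of_int (m * c))"

end

theory Submission
  imports Defs "HOL-Library.Product_Plus"
begin

unbundle fps_syntax

text \<open>Write \<open>u\<^sub>k = \<Sum> bt(k n) q\<^sup>n\<close>. Since \<open>u\<^sub>2\<^sub>k\<close> is the even part of \<open>u\<^sub>k\<close>, each congruence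
  follows from the previous one by extracting the even part of a short linear combination of eta
  quotients \<open>q\<^sup>t f\<^sub>1\<^sup>a f\<^sub>2\<^sup>b f\<^sub>4\<^sup>c f\<^sub>8\<^sup>d\<close>. Only the factor \<open>f\<^sub>1\<^sup>a\<close> is not a series in \<open>q\<^sup>2\<close>; it is
  split into even and odd parts with the 2-dissections of \<open>1/f\<^sub>1\<^sup>2\<close> and \<open>1/f\<^sub>1\<^sup>4\<close>, which come
  from \<open>\<phi>(q) = \<phi>(q\<^sup>4) + 2q\<psi>(q\<^sup>8)\<close> together with the product formulas
  \<open>\<phi> = f\<^sub>2\<^sup>5/(f\<^sub>1\<^sup>2f\<^sub>4\<^sup>2)\<close> and \<open>\<psi> = f\<^sub>2\<^sup>2/f\<^sub>1\<close> (limits of finite Jacobi triple products).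
  The odd part of the dissection of \<open>1/f\<^sub>1\<^sup>4\<close> carries the factor \<open>4q\<close>, so modulo 128 only four
  terms of the binomial expansion of \<open>f\<^sub>1\<^bsup>-4m\<^esup>\<close> survive, and the even parts become finite
  computations with exponent vectors.\<close>


definition fps_agree :: "nat \<Rightarrow> 'a::comm_ring_1 fps \<Rightarrow> 'a fps \<Rightarrow> bool" where
  "fps_agree M A B \<longleftrightarrow> (\<forall>i<M. A $ i = B $ i)"

lemma fps_agree_refl [simp]: "fps_agree M A A"
  by (simp add: fps_agree_def)

lemma fps_agree_sym: "fps_agree M A B \<Longrightarrow> fps_agree M B A"
  by (simp add: fps_agree_def)

lemma fps_agree_trans: "fps_agree M A B \<Longrightarrow> fps_agree M B C \<Longrightarrow> fps_agree M A C"
  by (simp add: fps_agree_def)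

lemma fps_agree_mono: "fps_agree M A B \<Longrightarrow> M' \<le> M \<Longrightarrow> fps_agree M' A B"
  by (simp add: fps_agree_def)

lemma fps_agree_add: "fps_agree M A B \<Longrightarrow> fps_agree M C E \<Longrightarrow> fps_agree M (A + C) (B + E)"
  by (simp add: fps_agree_def)

lemma fps_agree_diff: "fps_agree M A B \<Longrightarrow> fps_agree M C E \<Longrightarrow> fps_agree M (A - C) (B - E)"
  by (simp add: fps_agree_def)

lemma fps_agree_mult:
  assumes "fps_agree M A B" "fps_agree M C E"
  shows "fps_agree M (A * C) (B * E)"
  unfolding fps_agree_def
proof (intro allI impI)
  fix i assume "i < M"
  then show "(A * C) $ i = (B * E) $ i"
    using assms unfolding fps_mult_nth fps_agree_def by (intro sum.cong) auto
qed

lemma fps_agree_power: "fps_agree M A B \<Longrightarrow> fps_agree M (A ^ n) (B ^ n)"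
  by (induction n) (auto intro: fps_agree_mult)

lemma fps_agree_prod:
  "(\<And>x. x \<in> S \<Longrightarrow> fps_agree M (F x) (G x)) \<Longrightarrow> fps_agree M (prod F S) (prod G S)"
  by (induction S rule: infinite_finite_induct) (auto intro: fps_agree_mult)

lemma fps_agree_sum:
  "(\<And>x. x \<in> S \<Longrightarrow> fps_agree M (F x) (G x)) \<Longrightarrow> fps_agree M (sum F S) (sum G S)"
  by (induction S rule: infinite_finite_induct) (auto intro: fps_agree_add)

lemma fps_agree_cancel:
  fixes A B G :: "'a::field fps"
  assumes "fps_agree M (A * G) B" "G $ 0 \<noteq> 0"
  shows "fps_agree M A (B * inverse G)"
proof -
  have "fps_agree M (A * G * inverse G) (B * inverse G)"
    by (intro fps_agree_mult assms fps_agree_refl)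
  then show ?thesis
    using assms(2) by (simp add: mult.assoc inverse_mult_eq_1')
qed

lemma fps_agree_imp_eq: "(\<And>M. fps_agree M A B) \<Longrightarrow> A = B"
  by (metis fps_ext lessI fps_agree_def)

lemma fps_agree_X_power_mult_zero: "M \<le> e \<Longrightarrow> fps_agree M (fps_X ^ e * A) 0"
  by (simp add: fps_agree_def fps_X_power_mult_nth)

lemma fps_agree_one_minus_X_power: "M \<le> e \<Longrightarrow> fps_agree M (1 - fps_X ^ e) 1"
  using fps_agree_diff[OF fps_agree_refl fps_agree_X_power_mult_zero[of M e 1]] by simp


definition euler_prod :: "nat \<Rightarrow> nat \<Rightarrow> rat fps" where
  "euler_prod k N = (\<Prod>m\<in>{1..N}. 1 - fps_X ^ (m * k))"

lemma euler_prod_Suc: "euler_prod k (Suc N) = euler_prod k N * (1 - fps_X ^ (Suc N * k))"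
  by (simp add: euler_prod_def atLeastAtMostSuc_conv mult.commute)

lemma euler_prod_lessThan: "euler_prod k n = (\<Prod>i<n. 1 - fps_X ^ (Suc i * k))"
  by (induction n) (simp_all add: euler_prod_Suc euler_prod_def[of k 0])

lemma euler_prod_nth_0 [simp]: "k \<ge> 1 \<Longrightarrow> euler_prod k N $ 0 = 1"
  unfolding euler_prod_def by (induction N) (auto simp: atLeastAtMostSuc_conv)

lemma euler_prod_split:
  "n \<le> N \<Longrightarrow> euler_prod k N = euler_prod k n * (\<Prod>m\<in>{n<..N}. 1 - fps_X ^ (m * k))"
proof -
  assume "n \<le> N"
  then have "{1..N} = {1..n} \<union> {n<..N}" by auto
  then show ?thesis
    unfolding euler_prod_def by (simp add: prod.union_disjoint ivl_disj_int)
qed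

lemma fps_agree_euler_prod_prefix:
  assumes "k \<ge> 1" "n \<le> N"
  shows "fps_agree (n + 1) (euler_prod k N) (euler_prod k n)"
proof -
  have "fps_agree (n + 1) (\<Prod>m\<in>{n<..N}. 1 - fps_X ^ (m * k)) (\<Prod>m\<in>{n<..N}. 1)"
  proof (intro fps_agree_prod fps_agree_one_minus_X_power)
    fix m assume "m \<in> {n<..N}"
    then have "n + 1 \<le> m" by simp
    also have "m \<le> m * k" using assms(1) by simp
    finally show "n + 1 \<le> m * k" .
  qed
  then have "fps_agree (n + 1) (euler_prod k n * (\<Prod>m\<in>{n<..N}. 1 - fps_X ^ (m * k)))
                                (euler_prod k n * 1)"
    by (intro fps_agree_mult fps_agree_refl) simp
  then show ?thesis
    using euler_prod_split[OF assms(2)] by simp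
qed

lemma f_nth: "f k $ n = euler_prod k n $ n"
  by (simp add: f_def euler_prod_def)

lemma euler_prod_agree_f:
  assumes "k \<ge> 1" "M \<le> N + 1"
  shows "fps_agree M (euler_prod k N) (f k)"
  unfolding fps_agree_def
proof (intro allI impI)
  fix i assume "i < M"
  then have "fps_agree (i + 1) (euler_prod k N) (euler_prod k i)"
    using assms by (intro fps_agree_euler_prod_prefix) auto
  then show "euler_prod k N $ i = f k $ i"
    by (simp add: f_nth fps_agree_def)
qed

lemma f_nth_0 [simp]: "k \<ge> 1 \<Longrightarrow> f k $ 0 = 1"
  by (simp add: f_nth)

lemma f_mult_inverse: "k \<ge> 1 \<Longrightarrow> f k * inverse (f k) = 1"
  by (simp add: inverse_mult_eq_1')


section \<open>Dilation and even parts\<close>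

definition dilate :: "'a::idom fps \<Rightarrow> 'a fps" where
  "dilate A = A oo fps_X ^ 2"

definition even_part :: "'a::zero fps \<Rightarrow> 'a fps" where
  "even_part A = Abs_fps (\<lambda>n. A $ (2 * n))"

lemma dilate_nth: "dilate A $ n = (if even n then A $ (n div 2) else 0)"
proof -
  have "dilate A $ n = (\<Sum>i=0..n. A $ i * (if n = 2 * i then 1 else 0))"
    unfolding dilate_def fps_compose_nth by (simp add: power_mult[symmetric] mult.commute)
  also have "\<dots> = (\<Sum>i=0..n. if i = n div 2 then (if even n then A $ i else 0) else 0)"
    by (intro sum.cong) auto
  finally show ?thesis by (simp add: sum.delta)
qed

lemma dilate_diff: "dilate (A - B) = dilate A - dilate B"
  by (simp add: dilate_def fps_compose_sub_distrib)

lemma dilate_mult: "dilate (A * B) = dilate A * dilate B"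
  by (simp add: dilate_def fps_compose_mult_distrib)

lemma dilate_power: "dilate (A ^ n) = dilate A ^ n"
  by (simp add: dilate_def fps_compose_power)

lemma dilate_prod: "dilate (prod F S) = (\<Prod>x\<in>S. dilate (F x))"
  by (simp add: dilate_def fps_compose_prod_distrib)

lemma dilate_1 [simp]: "dilate 1 = 1"
  by (simp add: dilate_def)

lemma dilate_X: "dilate fps_X = fps_X ^ 2"
  by (simp add: dilate_def)

lemma dilate_X_power: "dilate (fps_X ^ n) = fps_X ^ (2 * n)"
  by (simp add: dilate_power dilate_X power_mult)

lemma dilate_of_int: "dilate (of_int c) = of_int c"
  by (simp add: dilate_def fps_of_int[symmetric])

lemma dilate_numeral [simp]: "dilate (numeral k) = numeral k"
  using dilate_of_int[of "numeral k"] by simp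

lemma dilate_inverse:
  fixes A :: "'a::field fps"
  shows "A $ 0 \<noteq> 0 \<Longrightarrow> dilate (inverse A) = inverse (dilate A)"
  by (simp add: dilate_def fps_inverse_compose)

lemma dilate_dilate_nth: "dilate (dilate A) $ n = (if 4 dvd n then A $ (n div 4) else 0)"
  by (auto simp: dilate_nth div_mult2_eq[symmetric] elim!: evenE)

lemma X_mult_dilate3_nth:
  "(fps_X * dilate (dilate (dilate B))) $ n = (if n mod 8 = 1 then B $ (n div 8) else 0)"
proof (cases n)
  case 0
  then show ?thesis by simp
next
  case (Suc m)
  have "dilate (dilate (dilate B)) $ m = (if 8 dvd m then B $ (m div 8) else 0)"
    by (auto simp: dilate_nth div_mult2_eq[symmetric] elim!: evenE)
  moreover have "(Suc m mod 8 = 1) = (8 dvd m)" by presburger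
  moreover have "8 dvd m \<Longrightarrow> Suc m div 8 = m div 8" by presburger
  ultimately show ?thesis using Suc by auto
qed

text \<open>Each coefficient is minus a coefficient of smaller index (at index 0, minus itself).\<close>
lemma eq_neg_dilate_imp_zero:
  fixes A :: "'a::{idom,ring_char_0} fps"
  assumes "A = - dilate A"
  shows "A = 0"
proof -
  have "A $ n = 0" for n
  proof (induction n rule: less_induct)
    case (less n)
    have "A $ n = - (dilate A $ n)" using assms by (metis fps_neg_nth)
    with less show ?case by (cases "n = 0") (simp_all add: dilate_nth)
  qed
  then show ?thesis by (simp add: fps_eq_iff)
qed

lemma even_part_add: "even_part (A + B) = even_part A + even_part B"
  by (simp add: even_part_def fps_eq_iff)

lemma even_part_of_int_mult: "even_part (of_int c * A) = of_int c * even_part A"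
  by (simp add: even_part_def fps_eq_iff fps_of_int[symmetric])

lemma even_part_dilate: "even_part (dilate A) = A"
  by (simp add: even_part_def dilate_nth fps_eq_iff)

lemma even_part_X_mult_dilate: "even_part (fps_X * dilate A) = 0"
  by (auto simp: even_part_def dilate_nth fps_eq_iff)

lemma even_part_X_power_mult_dilate:
  "even_part (fps_X ^ t * dilate N) = (if even t then fps_X ^ (t div 2) * N else 0)"
proof (cases "even t")
  case True
  then show ?thesis
    using even_part_dilate[of "fps_X ^ (t div 2) * N"] by (simp add: dilate_mult dilate_X_power)
next
  case False
  then have "fps_X ^ t * dilate N = fps_X * dilate (fps_X ^ (t div 2) * N)"
    by (simp add: dilate_mult dilate_X_power odd_two_times_div_two_succ flip: power_Suc)
  with False show ?thesis
    by (simp add: even_part_X_mult_dilate)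
qed

lemma dilate_euler_prod: "dilate (euler_prod k N) = euler_prod (2 * k) N"
  unfolding euler_prod_def dilate_prod
  by (simp add: dilate_diff dilate_X_power mult.assoc mult.left_commute)

lemma fps_agree_dilate: "fps_agree M A B \<Longrightarrow> fps_agree (2 * M) (dilate A) (dilate B)"
  by (auto simp: fps_agree_def dilate_nth)

lemma dilate_f:
  assumes "k \<ge> 1"
  shows "dilate (f k) = f (2 * k)"
proof (rule fps_agree_imp_eq)
  fix M
  have "fps_agree (2 * (M + 1)) (dilate (euler_prod k M)) (dilate (f k))"
    using assms by (intro fps_agree_dilate euler_prod_agree_f) auto
  then have "fps_agree M (euler_prod (2 * k) M) (dilate (f k))"
    by (auto simp: dilate_euler_prod intro: fps_agree_mono)
  moreover have "fps_agree M (euler_prod (2 * k) M) (f (2 * k))"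
    using assms by (intro euler_prod_agree_f) auto
  ultimately show "fps_agree M (dilate (f k)) (f (2 * k))"
    by (meson fps_agree_sym fps_agree_trans)
qed


definition int_coeffs :: "'a::ring_1 fps \<Rightarrow> bool" where
  "int_coeffs A \<longleftrightarrow> (\<forall>n. A $ n \<in> \<int>)"

lemma int_coeffs_add: "int_coeffs A \<Longrightarrow> int_coeffs B \<Longrightarrow> int_coeffs (A + B)"
  by (simp add: int_coeffs_def)

lemma int_coeffs_diff: "int_coeffs A \<Longrightarrow> int_coeffs B \<Longrightarrow> int_coeffs (A - B)"
  by (simp add: int_coeffs_def)

lemma int_coeffs_mult: "int_coeffs A \<Longrightarrow> int_coeffs B \<Longrightarrow> int_coeffs (A * B)"
  by (auto simp: int_coeffs_def fps_mult_nth intro!: Ints_sum)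

lemma int_coeffs_1 [simp]: "int_coeffs 1"
  by (simp add: int_coeffs_def fps_one_nth)

lemma int_coeffs_0 [simp]: "int_coeffs 0"
  by (simp add: int_coeffs_def)

lemma int_coeffs_X [simp]: "int_coeffs fps_X"
  by (simp add: int_coeffs_def fps_X_def)

lemma int_coeffs_of_int [simp]: "int_coeffs (of_int c)"
  by (simp add: int_coeffs_def)

lemma int_coeffs_power: "int_coeffs A \<Longrightarrow> int_coeffs (A ^ n)"
  by (induction n) (auto intro: int_coeffs_mult)

lemma int_coeffs_X_power [simp]: "int_coeffs (fps_X ^ n)"
  by (simp add: int_coeffs_power)

lemma int_coeffs_prod: "(\<And>x. x \<in> S \<Longrightarrow> int_coeffs (F x)) \<Longrightarrow> int_coeffs (prod F S)"
  by (induction S rule: infinite_finite_induct) (auto intro: int_coeffs_mult)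

lemma int_coeffs_dilate: "int_coeffs A \<Longrightarrow> int_coeffs (dilate A)"
  by (simp add: int_coeffs_def dilate_nth)

text \<open>The coefficients of \<open>1/A\<close> satisfy a recursion with integer coefficients, because
  \<open>A $ 0 = 1\<close>.\<close>
lemma int_coeffs_inverse:
  fixes A :: "'a::field fps"
  assumes "int_coeffs A" "A $ 0 = 1"
  shows "int_coeffs (inverse A)"
proof -
  let ?B = "inverse A"
  have AB: "A * ?B = 1" using assms(2) by (simp add: inverse_mult_eq_1')
  have "?B $ n \<in> \<int>" for n
  proof (induction n rule: less_induct)
    case (less n)
    show ?case
    proof (cases n)
      case 0
      then show ?thesis using assms(2) by simp
    next
      case (Suc m)
      have "(A * ?B) $ n = 0" using AB Suc by simp
      then have "(\<Sum>i=0..n. A $ i * ?B $ (n - i)) = 0" by (simp add: fps_mult_nth)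
      moreover have "(\<Sum>i=0..n. A $ i * ?B $ (n - i))
          = A $ 0 * ?B $ n + (\<Sum>i=1..n. A $ i * ?B $ (n - i))"
        by (simp add: sum.atLeast_Suc_atMost Suc)
      ultimately have "?B $ n = - (\<Sum>i=1..n. A $ i * ?B $ (n - i))"
        using assms(2) by (simp add: eq_neg_iff_add_eq_0)
      moreover have "(\<Sum>i=1..n. A $ i * ?B $ (n - i)) \<in> \<int>"
        using assms(1) less Suc by (intro Ints_sum Ints_mult) (auto simp: int_coeffs_def)
      ultimately show ?thesis by simp
    qed
  qed
  then show ?thesis by (simp add: int_coeffs_def)
qed

lemma int_coeffs_euler_prod: "int_coeffs (euler_prod k N)"
  unfolding euler_prod_def by (intro int_coeffs_prod int_coeffs_diff) auto

lemma int_coeffs_f: "int_coeffs (f k)"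
  using int_coeffs_euler_prod by (simp add: int_coeffs_def f_nth)

lemma fps_cong_iff: "fps_cong A B m \<longleftrightarrow> (\<exists>C. int_coeffs C \<and> A - B = of_int m * C)"
proof
  assume "fps_cong A B m"
  then obtain c where c: "\<And>n. A $ n - B $ n = of_int (m * c n)"
    unfolding fps_cong_def by metis
  have "A - B = of_int m * Abs_fps (\<lambda>n. of_int (c n))"
    by (rule fps_ext) (simp add: c fps_of_int[symmetric])
  then show "\<exists>C. int_coeffs C \<and> A - B = of_int m * C"
    by (intro exI[of _ "Abs_fps (\<lambda>n. of_int (c n))"]) (simp add: int_coeffs_def)
next
  assume "\<exists>C. int_coeffs C \<and> A - B = of_int m * C"
  then obtain C where C: "int_coeffs C" "A - B = of_int m * C" by blast
  show "fps_cong A B m"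
    unfolding fps_cong_def
  proof
    fix n
    obtain c where "C $ n = of_int c"
      using C(1) unfolding int_coeffs_def by (meson Ints_cases)
    moreover have "A $ n - B $ n = of_int m * C $ n"
      by (metis C(2) fps_sub_nth fps_mult_left_const_nth fps_of_int)
    ultimately show "\<exists>c. A $ n - B $ n = of_int (m * c)" by auto
  qed
qed

lemma fps_cong_refl [simp]: "fps_cong A A m"
  by (simp add: fps_cong_def)

lemma fps_cong_trans:
  assumes "fps_cong A B m" "fps_cong B C m"
  shows "fps_cong A C m"
proof -
  obtain C1 C2 where "int_coeffs C1" "A - B = of_int m * C1" "int_coeffs C2" "B - C = of_int m * C2"
    using assms by (auto simp: fps_cong_iff)
  then have "int_coeffs (C1 + C2) \<and> A - C = of_int m * (C1 + C2)"
    by (auto intro: int_coeffs_add simp: algebra_simps)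
  then show ?thesis by (auto simp: fps_cong_iff)
qed

lemma fps_cong_add:
  assumes "fps_cong A B m" "fps_cong C E m"
  shows "fps_cong (A + C) (B + E) m"
proof -
  obtain C1 C2 where "int_coeffs C1" "A - B = of_int m * C1" "int_coeffs C2" "C - E = of_int m * C2"
    using assms by (auto simp: fps_cong_iff)
  then have "int_coeffs (C1 + C2) \<and> A + C - (B + E) = of_int m * (C1 + C2)"
    by (auto intro: int_coeffs_add simp: algebra_simps)
  then show ?thesis by (auto simp: fps_cong_iff)
qed

lemma fps_cong_mult_left:
  assumes "fps_cong A B m" "int_coeffs G"
  shows "fps_cong (G * A) (G * B) m"
proof -
  obtain C where "int_coeffs C" "A - B = of_int m * C"
    using assms(1) fps_cong_iff by blast
  then have "int_coeffs (G * C) \<and> G * A - G * B = of_int m * (G * C)"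
    using assms(2) by (auto intro: int_coeffs_mult simp: algebra_simps right_diff_distrib[symmetric])
  then show ?thesis using fps_cong_iff by blast
qed

lemma fps_cong_even_part: "fps_cong A B m \<Longrightarrow> fps_cong (even_part A) (even_part B) m"
  by (simp add: fps_cong_def even_part_def)

lemma fps_cong_multiple_zero: "int_coeffs C \<Longrightarrow> m dvd c \<Longrightarrow> fps_cong (of_int c * C) 0 m"
  by (auto simp: fps_cong_iff intro!: exI[of _ "of_int (c div m) * C"] int_coeffs_mult)

lemma fps_cong_sum_zero: "(\<And>k. k \<in> S \<Longrightarrow> fps_cong (F k) 0 m) \<Longrightarrow> fps_cong (sum F S) 0 m"
  by (induction S rule: infinite_finite_induct) (auto, metis add.right_neutral fps_cong_add)

lemma fps_cong_diff_zero_iff: "fps_cong (A - B) 0 m \<longleftrightarrow> fps_cong A B m"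
  by (simp add: fps_cong_def)


definition ipow :: "'a::field fps \<Rightarrow> int \<Rightarrow> 'a fps" where
  "ipow g z = (if z \<ge> 0 then g ^ nat z else inverse g ^ nat (- z))"

lemma ipow_add:
  assumes "g $ 0 \<noteq> 0"
  shows "ipow g (a + b) = ipow g a * ipow g b"
proof -
  have gi: "g * inverse g = 1" using assms by (simp add: inverse_mult_eq_1')
  have c1: "g ^ (x + y) * inverse g ^ y = g ^ x" for x y
    by (simp add: power_add mult.assoc power_mult_distrib[symmetric] gi)
  have c2: "inverse g ^ (x + y) * g ^ y = inverse g ^ x" for x y
    by (simp add: power_add mult.assoc power_mult_distrib[symmetric] gi mult.commute)
  consider "a \<ge> 0" "b \<ge> 0" | "a + b \<ge> 0" "a < 0 \<or> b < 0" | "a + b < 0" "a \<ge> 0 \<or> b \<ge> 0"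
    | "a < 0" "b < 0"
    by linarith
  then show ?thesis
  proof cases
    case 1
    then show ?thesis by (simp add: ipow_def nat_add_distrib power_add)
  next
    case 2
    then show ?thesis
      using c1[of "nat (a + b)" "nat (- a)"] c1[of "nat (a + b)" "nat (- b)"]
      by (auto simp: ipow_def mult.commute simp flip: nat_add_distrib)
  next
    case 3
    then show ?thesis
      using c2[of "nat (- (a + b))" "nat a"] c2[of "nat (- (a + b))" "nat b"]
      by (auto simp: ipow_def mult.commute simp flip: nat_add_distrib)
  next
    case 4
    then have "nat (- a - b) = nat (- a) + nat (- b)" by simp
    with 4 show ?thesis by (simp add: ipow_def power_add)
  qed
qed

lemma ipow_0 [simp]: "ipow g 0 = 1"
  by (simp add: ipow_def)

lemma ipow_nth_0: "g $ 0 = 1 \<Longrightarrow> ipow g z $ 0 = 1"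
  by (simp add: ipow_def fps_nth_power_0)

lemma ipow_of_nat_mult: "g $ 0 \<noteq> 0 \<Longrightarrow> ipow g (int n * z) = ipow g z ^ n"
  by (induction n) (simp_all add: ipow_add distrib_right)

lemma int_coeffs_ipow: "int_coeffs g \<Longrightarrow> g $ 0 = 1 \<Longrightarrow> int_coeffs (ipow g z)"
  by (simp add: ipow_def int_coeffs_power int_coeffs_inverse)

lemma dilate_ipow: "g $ 0 \<noteq> 0 \<Longrightarrow> dilate (ipow g z) = ipow (dilate g) z"
  by (simp add: ipow_def dilate_power dilate_inverse)

type_synonym eta_exponent = "int \<times> int \<times> int \<times> int \<times> int"

fun eta_quot :: "eta_exponent \<Rightarrow> rat fps" where
  "eta_quot (a, b, c, d, e) = ipow (f 1) a * ipow (f 2) b * ipow (f 4) c * ipow (f 8) d * ipow (f 16) e"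

fun exponent_scale :: "int \<Rightarrow> eta_exponent \<Rightarrow> eta_exponent" where
  "exponent_scale k (a, b, c, d, e) = (k * a, k * b, k * c, k * d, k * e)"

lemma eta_quot_mult: "eta_quot v * eta_quot w = eta_quot (v + w)"
  by (cases v; cases w) (simp add: ipow_add mult_ac)

lemma eta_quot_power: "eta_quot v ^ n = eta_quot (exponent_scale (int n) v)"
  by (cases v) (simp add: ipow_of_nat_mult power_mult_distrib)

lemma int_coeffs_eta_quot: "int_coeffs (eta_quot v)"
  by (cases v) (simp add: int_coeffs_ipow int_coeffs_f int_coeffs_mult)

lemma eta_quot_nth_0: "eta_quot v $ 0 = 1"
  by (cases v) (simp add: ipow_nth_0)

lemma dilate_eta_quot: "dilate (eta_quot (a, b, c, d, 0)) = eta_quot (0, a, b, c, d)"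
  by (simp add: dilate_mult dilate_ipow dilate_f)

lemma f_eq_eta_quot:
  "f 1 = eta_quot (1, 0, 0, 0, 0)" "f 2 = eta_quot (0, 1, 0, 0, 0)"
  "f 4 = eta_quot (0, 0, 1, 0, 0)" "f 8 = eta_quot (0, 0, 0, 1, 0)"
  by (simp_all add: ipow_def)

lemma eta_quot_zero [simp]: "eta_quot (0, 0, 0, 0, 0) = 1"
  by simp

declare eta_quot.simps [simp del]

lemma eta_quot_inverse: "inverse (eta_quot v) = eta_quot (exponent_scale (-1) v)"
  by (rule fps_inverse_unique) (cases v, simp add: eta_quot_mult)

lemma divide_eta_quot: "A / eta_quot v = A * eta_quot (exponent_scale (-1) v)"
  by (simp add: fps_divide_unit eta_quot_nth_0 eta_quot_inverse)


section \<open>Gaussian binomial coefficients\<close>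

fun qbinomial :: "'a::comm_ring_1 \<Rightarrow> nat \<Rightarrow> nat \<Rightarrow> 'a" where
  "qbinomial p 0 k = (if k = 0 then 1 else 0)"
| "qbinomial p (Suc N) k =
     (case k of 0 \<Rightarrow> 1 | Suc i \<Rightarrow> qbinomial p N (Suc i) + p ^ (N - i) * qbinomial p N i)"

lemma qbinomial_eq_0: "N < k \<Longrightarrow> qbinomial p N k = 0"
proof (induction N arbitrary: k)
  case 0
  then show ?case by simp
next
  case (Suc N)
  then show ?case by (cases k) auto
qed

lemma qbinomial_0_right [simp]: "qbinomial p N 0 = 1"
  by (cases N) auto

lemma qbinomial_self [simp]: "qbinomial p N N = 1"
  by (induction N) (auto simp: qbinomial_eq_0)

lemma triangular_Suc: "Suc i * (Suc i - 1) div 2 = i * (i - 1) div 2 + i"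
proof -
  have "Suc i * i = i * (i - 1) + 2 * i" by (cases i) (auto simp: algebra_simps)
  moreover have "even (i * (i - 1))" by (cases i) auto
  ultimately show ?thesis by auto
qed

lemma cauchy_binomial:
  fixes p y z :: "'a::comm_ring_1"
  shows "(\<Prod>j<N. y + z * p ^ j)
           = (\<Sum>k\<le>N. qbinomial p N k * p ^ (k * (k - 1) div 2) * z ^ k * y ^ (N - k))"
proof (induction N)
  case 0
  then show ?case by simp
next
  case (Suc N)
  let ?T = "\<lambda>k::nat. k * (k - 1) div 2"
  let ?S = "\<Sum>k\<le>N. qbinomial p N k * p ^ ?T k * z ^ k * y ^ (N - k)"
  have "(\<Sum>k\<le>Suc N. qbinomial p (Suc N) k * p ^ ?T k * z ^ k * y ^ (Suc N - k))
      = y ^ Suc N + (\<Sum>i\<le>N. (qbinomial p N (Suc i) + p ^ (N - i) * qbinomial p N i)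
                             * p ^ ?T (Suc i) * z ^ Suc i * y ^ (N - i))"
    by (subst sum.atMost_Suc_shift) simp
  also have "\<dots> = (y ^ Suc N + (\<Sum>i\<le>N. qbinomial p N (Suc i) * p ^ ?T (Suc i) * z ^ Suc i * y ^ (N - i)))
      + (\<Sum>i\<le>N. p ^ (N - i) * qbinomial p N i * p ^ ?T (Suc i) * z ^ Suc i * y ^ (N - i))"
    by (simp add: distrib_right sum.distrib)
  also have "y ^ Suc N + (\<Sum>i\<le>N. qbinomial p N (Suc i) * p ^ ?T (Suc i) * z ^ Suc i * y ^ (N - i))
      = (\<Sum>k\<le>Suc N. qbinomial p N k * p ^ ?T k * z ^ k * y ^ (Suc N - k))"
    by (simp only: sum.atMost_Suc_shift) simp
  also have "\<dots> = ?S * y"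
    by (simp add: sum.atMost_Suc qbinomial_eq_0 sum_distrib_left Suc_diff_le mult_ac)
  also have "(\<Sum>i\<le>N. p ^ (N - i) * qbinomial p N i * p ^ ?T (Suc i) * z ^ Suc i * y ^ (N - i))
      = ?S * (z * p ^ N)"
  proof -
    have "p ^ (N - i) * qbinomial p N i * p ^ ?T (Suc i) * z ^ Suc i * y ^ (N - i) =
          qbinomial p N i * p ^ ?T i * z ^ i * y ^ (N - i) * (z * p ^ N)" if "i \<le> N" for i
    proof -
      have "N - i + ?T (Suc i) = ?T i + N" using that unfolding triangular_Suc by simp
      then have "p ^ (N - i) * p ^ ?T (Suc i) = p ^ ?T i * p ^ N"
        by (metis power_add)
      then show ?thesis by (simp add: algebra_simps)
    qed
    then show ?thesis by (simp add: sum_distrib_right)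
  qed
  finally show ?case using Suc by (simp add: distrib_left algebra_simps)
qed

definition qfact :: "'a::comm_ring_1 \<Rightarrow> nat \<Rightarrow> 'a" where
  "qfact p n = (\<Prod>i\<in>{1..n}. 1 - p ^ i)"

lemma qfact_0 [simp]: "qfact p 0 = 1"
  by (simp add: qfact_def)

lemma qfact_Suc: "qfact p (Suc n) = qfact p n * (1 - p ^ Suc n)"
  by (simp add: qfact_def atLeastAtMostSuc_conv mult.commute)

lemma qbinomial_qfact_Suc_Suc:
  fixes p :: "'a::comm_ring_1"
  assumes "i < N"
    and IH: "\<And>k. k \<le> N \<Longrightarrow> qbinomial p N k * qfact p k * qfact p (N - k) = qfact p N"
  shows "qbinomial p (Suc N) (Suc i) * qfact p (Suc i) * qfact p (Suc N - Suc i) = qfact p (Suc N)"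
proof -
  have Ni: "N - i = Suc (N - Suc i)" using assms(1) by simp
  have "qbinomial p (Suc N) (Suc i) * qfact p (Suc i) * qfact p (Suc N - Suc i) =
      qbinomial p N (Suc i) * qfact p (Suc i) * qfact p (N - i)
      + p ^ (N - i) * (qbinomial p N i * qfact p (Suc i) * qfact p (N - i))"
    by (simp add: algebra_simps)
  also have "qbinomial p N (Suc i) * qfact p (Suc i) * qfact p (N - i) = qfact p N * (1 - p ^ (N - i))"
    using IH[of "Suc i"] assms(1) by (simp add: Ni qfact_Suc mult.assoc[symmetric])
  also have "qbinomial p N i * qfact p (Suc i) * qfact p (N - i) = qfact p N * (1 - p ^ Suc i)"
  proof -
    have "qbinomial p N i * qfact p (Suc i) * qfact p (N - i)
        = (qbinomial p N i * qfact p i * qfact p (N - i)) * (1 - p ^ Suc i)"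
      by (simp only: qfact_Suc mult_ac)
    then show ?thesis using IH[of i] assms(1) by simp
  qed
  also have "qfact p N * (1 - p ^ (N - i)) + p ^ (N - i) * (qfact p N * (1 - p ^ Suc i)) = qfact p (Suc N)"
  proof -
    have "N - i + Suc i = Suc N" using assms(1) by simp
    then have "p ^ (N - i) * p ^ Suc i = p ^ Suc N" by (metis power_add)
    moreover have "qfact p N * (1 - x) + x * (qfact p N * (1 - y)) = qfact p N * (1 - x * y)" for x y
      by (simp add: algebra_simps)
    ultimately show ?thesis by (simp only: qfact_Suc)
  qed
  finally show ?thesis .
qed

lemma qbinomial_qfact: "k \<le> N \<Longrightarrow> qbinomial p N k * qfact p k * qfact p (N - k) = qfact p N"
proof (induction N arbitrary: k)
  case 0
  then show ?case by simp
next
  case (Suc N)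
  show ?case
  proof (cases k)
    case 0
    then show ?thesis by simp
  next
    case (Suc i)
    then consider "i = N" | "i < N" using Suc.prems by linarith
    then show ?thesis
    proof cases
      case 1
      then show ?thesis using Suc by (simp add: qbinomial_eq_0)
    next
      case 2
      then show ?thesis using qbinomial_qfact_Suc_Suc[OF 2 Suc.IH] Suc by simp
    qed
  qed
qed


section \<open>Product formulas for two theta series\<close>

abbreviation X :: "rat fps" where "X \<equiv> fps_X"

lemma qfact_X_power: "qfact (X ^ d) n = euler_prod d n"
  unfolding qfact_def euler_prod_def by (simp add: power_mult[symmetric] mult.commute)

lemma prod_lessThan_add:
  fixes g :: "nat \<Rightarrow> 'a::comm_monoid_mult"
  shows "(\<Prod>j<n + m. g j) = (\<Prod>j<n. g j) * (\<Prod>j<m. g (n + j))"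
  by (induction m) (simp_all add: mult.assoc)

lemma prod_X_power_even: "(\<Prod>j<n. X ^ (2 * j)) = X ^ (n * (n - 1))"
proof (induction n)
  case 0
  then show ?case by simp
next
  case (Suc n)
  have "n * (n - 1) + 2 * n = Suc n * n" by (cases n) (auto simp: algebra_simps)
  then show ?case using Suc by (simp add: power_add[symmetric])
qed

lemma prod_X_power: "(\<Prod>j<n. X ^ j) = X ^ (n * (n - 1) div 2)"
proof (induction n)
  case 0
  then show ?case by simp
next
  case (Suc n)
  have "n * (n - 1) div 2 + n = Suc n * n div 2"
    using triangular_Suc[of n] by simp
  then show ?case using Suc by (simp add: power_add[symmetric])
qed

text \<open>\<open>theta_sq\<close> is Ramanujan's \<open>\<phi>(q) = \<Sum>\<^sub>i q^(i\<^sup>2)\<close> and \<open>theta_tri\<close> is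
  \<open>\<Sum>\<^sub>i q^(i(i-1)/2) = 2\<psi>(q)\<close>, both sums running over all integers \<open>i\<close>.\<close>
definition theta_sq :: "rat fps" where
  "theta_sq = Abs_fps (\<lambda>m. of_nat (card {i::int. i ^ 2 = int m}))"

definition theta_tri :: "rat fps" where
  "theta_tri = Abs_fps (\<lambda>m. of_nat (card {i::int. i * (i - 1) = 2 * int m}))"

definition sq_offset :: "nat \<Rightarrow> nat \<Rightarrow> nat" where
  "sq_offset n k = nat ((int k - int n) ^ 2)"

definition tri_offset :: "nat \<Rightarrow> nat \<Rightarrow> nat" where
  "tri_offset n k = nat ((int k - int n) * (int k - int n - 1) div 2)"

definition plus_odd_prod :: "nat \<Rightarrow> rat fps" where
  "plus_odd_prod n = (\<Prod>j<n. 1 + X ^ (2 * j + 1))"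

definition plus_prod :: "nat \<Rightarrow> rat fps" where
  "plus_prod n = (\<Prod>j<n. 1 + X ^ (j + 1))"

definition minus_odd_prod :: "nat \<Rightarrow> nat \<Rightarrow> rat fps" where
  "minus_odd_prod k n = (\<Prod>j<n. 1 - X ^ ((2 * j + 1) * k))"

lemma mult_pred_nonneg: "(x::int) * (x - 1) \<ge> 0"
  by (cases "x \<ge> 1") (simp_all add: mult_nonpos_nonpos)

lemma abs_le_square: "\<bar>x::int\<bar> \<le> x ^ 2"
proof -
  have "0 \<le> \<bar>x\<bar> * (\<bar>x\<bar> - 1)" by (rule mult_pred_nonneg)
  then show ?thesis by (simp add: power2_eq_square algebra_simps)
qed

lemma abs_le_mult_pred_plus_1: "\<bar>x::int\<bar> \<le> x * (x - 1) + 1"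
proof -
  have "0 \<le> (\<bar>x\<bar> - 1) ^ 2" by simp
  then show ?thesis by (cases "x \<ge> 0") (simp_all add: power2_eq_square algebra_simps)
qed

lemma even_mult_pred: "even ((x::int) * (x - 1))"
  by (cases "even x") auto

lemma two_mult_tri_offset: "int (tri_offset n k) * 2 = (int k - int n) * (int k - int n - 1)"
proof -
  define x where "x = int k - int n"
  obtain t where t: "x * (x - 1) = 2 * t"
    using even_mult_pred[of x] by (blast elim: evenE)
  moreover have "t \<ge> 0" using mult_pred_nonneg[of x] t by simp
  ultimately show ?thesis by (simp add: tri_offset_def flip: x_def)
qed

lemma sq_offset_exponent:
  assumes "k \<le> 2 * n" "n \<ge> 1"
  shows "2 * (k * (k - 1) div 2) + (2 * n - 1) * (2 * n - k)
           = n * (n - 1) + n * (2 * n - 1) + sq_offset n k"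
proof -
  have ev: "even (k * (k - 1))" by (cases k) auto
  have i1: "int (k * (k - 1)) = int k * (int k - 1)" by (cases k) (auto simp: algebra_simps)
  have i2: "int ((2 * n - 1) * (2 * n - k)) = (2 * int n - 1) * (2 * int n - int k)"
    using assms by (simp add: of_nat_diff)
  have i3: "int (n * (n - 1)) = int n * (int n - 1)" by (cases n) (auto simp: algebra_simps)
  have i4: "int (n * (2 * n - 1)) = int n * (2 * int n - 1)" using assms by (simp add: of_nat_diff)
  have i5: "int (sq_offset n k) = (int k - int n) ^ 2" by (simp add: sq_offset_def)
  have "int (k * (k - 1) + (2 * n - 1) * (2 * n - k)) = int (n * (n - 1) + n * (2 * n - 1) + sq_offset n k)"
    unfolding of_nat_add i1 i2 i3 i4 i5 by (simp add: algebra_simps power2_eq_square)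
  then show ?thesis using ev by (simp add: dvd_mult_div_cancel del: of_nat_add)
qed

lemma tri_offset_exponent:
  assumes "k \<le> 2 * n"
  shows "k * (k - 1) div 2 + n * (2 * n - k) = n * (n - 1) div 2 + n * n + tri_offset n k"
proof -
  have evk: "even (k * (k - 1))" by (cases k) auto
  have evn: "even (n * (n - 1))" by (cases n) auto
  have i1: "int (k * (k - 1)) = int k * (int k - 1)" by (cases k) (auto simp: algebra_simps)
  have i2: "int (n * (2 * n - k)) = int n * (2 * int n - int k)"
    using assms by (simp add: of_nat_diff)
  have i3: "int (n * (n - 1)) = int n * (int n - 1)" by (cases n) (auto simp: algebra_simps)
  have "int (k * (k - 1) + 2 * (n * (2 * n - k))) = int (n * (n - 1) + 2 * (n * n) + 2 * tri_offset n k)"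
    using two_mult_tri_offset[of n k] unfolding of_nat_add of_nat_mult[of 2] i1 i2 i3
    by (simp add: algebra_simps)
  then have "k * (k - 1) + 2 * (n * (2 * n - k)) = n * (n - 1) + 2 * (n * n) + 2 * tri_offset n k"
    by (simp only: of_nat_eq_iff)
  then show ?thesis using evk evn by (auto elim!: evenE)
qed

lemma prod_sq_shift:
  assumes "n \<ge> 1"
  shows "(\<Prod>j<2 * n. X ^ (2 * n - 1) + X ^ (2 * j))
           = X ^ (n * (n - 1) + n * (2 * n - 1)) * plus_odd_prod n ^ 2"
proof -
  have "(\<Prod>j<2 * n. X ^ (2 * n - 1) + X ^ (2 * j)) =
        (\<Prod>j<n. X ^ (2 * n - 1) + X ^ (2 * j)) * (\<Prod>j<n. X ^ (2 * n - 1) + X ^ (2 * (n + j)))"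
    using prod_lessThan_add[of "\<lambda>j. X ^ (2 * n - 1) + X ^ (2 * j)" n n] by (simp add: mult_2)
  also have "(\<Prod>j<n. X ^ (2 * n - 1) + X ^ (2 * j)) = (\<Prod>j<n. X ^ (2 * j) * (1 + X ^ (2 * (n - Suc j) + 1)))"
  proof (rule prod.cong[OF refl])
    fix j assume "j \<in> {..<n}"
    then have "2 * j + (2 * (n - Suc j) + 1) = 2 * n - 1" by auto
    then have "X ^ (2 * n - 1) = X ^ (2 * j) * X ^ (2 * (n - Suc j) + 1)" by (metis power_add)
    then show "X ^ (2 * n - 1) + X ^ (2 * j) = X ^ (2 * j) * (1 + X ^ (2 * (n - Suc j) + 1))"
      by (simp only: distrib_left mult_1_right add.commute)
  qed
  also have "\<dots> = X ^ (n * (n - 1)) * plus_odd_prod n"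
    unfolding prod.distrib prod_X_power_even plus_odd_prod_def
    using prod.nat_diff_reindex[of "\<lambda>j. 1 + X ^ (2 * j + 1)" n] by simp
  also have "(\<Prod>j<n. X ^ (2 * n - 1) + X ^ (2 * (n + j))) = (\<Prod>j<n. X ^ (2 * n - 1) * (1 + X ^ (2 * j + 1)))"
  proof (rule prod.cong[OF refl])
    fix j assume "j \<in> {..<n}"
    have "2 * n - 1 + (2 * j + 1) = 2 * (n + j)" using assms by auto
    then have "X ^ (2 * (n + j)) = X ^ (2 * n - 1) * X ^ (2 * j + 1)" by (metis power_add)
    then show "X ^ (2 * n - 1) + X ^ (2 * (n + j)) = X ^ (2 * n - 1) * (1 + X ^ (2 * j + 1))"
      by (simp only: distrib_left mult_1_right)
  qed
  also have "\<dots> = X ^ (n * (2 * n - 1)) * plus_odd_prod n"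
    unfolding prod.distrib plus_odd_prod_def by (simp add: power_mult[symmetric] mult.commute)
  finally show ?thesis by (simp add: power_add power2_eq_square mult_ac)
qed

text \<open>Finite forms of the Jacobi triple product, obtained from \<open>cauchy_binomial\<close>.\<close>
lemma plus_odd_prod_square:
  assumes "n \<ge> 1"
  shows "plus_odd_prod n ^ 2 = (\<Sum>k\<le>2 * n. qbinomial (X ^ 2) (2 * n) k * X ^ sq_offset n k)"
proof -
  let ?c = "n * (n - 1) + n * (2 * n - 1)"
  have "X ^ ?c * plus_odd_prod n ^ 2 = (\<Prod>j<2 * n. X ^ (2 * n - 1) + 1 * (X ^ 2) ^ j)"
    using prod_sq_shift[OF assms] by (simp add: power_mult[symmetric])
  also have "\<dots> = (\<Sum>k\<le>2 * n. qbinomial (X ^ 2) (2 * n) k * (X ^ 2) ^ (k * (k - 1) div 2)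
                              * 1 ^ k * (X ^ (2 * n - 1)) ^ (2 * n - k))"
    by (rule cauchy_binomial)
  also have "\<dots> = (\<Sum>k\<le>2 * n. X ^ ?c * (qbinomial (X ^ 2) (2 * n) k * X ^ sq_offset n k))"
  proof (rule sum.cong[OF refl])
    fix k assume "k \<in> {..2 * n}"
    then have "2 * (k * (k - 1) div 2) + (2 * n - 1) * (2 * n - k) = ?c + sq_offset n k"
      using sq_offset_exponent assms by simp
    then show "qbinomial (X ^ 2) (2 * n) k * (X ^ 2) ^ (k * (k - 1) div 2) * 1 ^ k
                 * (X ^ (2 * n - 1)) ^ (2 * n - k)
               = X ^ ?c * (qbinomial (X ^ 2) (2 * n) k * X ^ sq_offset n k)"
      by (simp add: power_mult[symmetric] power_add[symmetric] mult_ac)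
  qed
  finally have "X ^ ?c * plus_odd_prod n ^ 2
      = X ^ ?c * (\<Sum>k\<le>2 * n. qbinomial (X ^ 2) (2 * n) k * X ^ sq_offset n k)"
    by (simp only: sum_distrib_left)
  then show ?thesis by simp
qed

lemma prod_tri_shift:
  assumes "n \<ge> 1"
  shows "(\<Prod>j<2 * n. X ^ n + X ^ j) = X ^ (n * (n - 1) div 2 + n * n) * (2 * plus_prod n * plus_prod (n - 1))"
proof -
  have "(\<Prod>j<2 * n. X ^ n + X ^ j) = (\<Prod>j<n. X ^ n + X ^ j) * (\<Prod>j<n. X ^ n + X ^ (n + j))"
    using prod_lessThan_add[of "\<lambda>j. X ^ n + X ^ j" n n] by (simp add: mult_2)
  also have "(\<Prod>j<n. X ^ n + X ^ j) = (\<Prod>j<n. X ^ j * (1 + X ^ ((n - Suc j) + 1)))"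
  proof (rule prod.cong[OF refl])
    fix j assume "j \<in> {..<n}"
    then have "j + ((n - Suc j) + 1) = n" by auto
    then have "X ^ n = X ^ j * X ^ ((n - Suc j) + 1)" by (metis power_add)
    then show "X ^ n + X ^ j = X ^ j * (1 + X ^ ((n - Suc j) + 1))"
      by (simp only: distrib_left mult_1_right add.commute)
  qed
  also have "\<dots> = X ^ (n * (n - 1) div 2) * plus_prod n"
    unfolding prod.distrib prod_X_power plus_prod_def
    using prod.nat_diff_reindex[of "\<lambda>j. 1 + X ^ (j + 1)" n] by simp
  also have "(\<Prod>j<n. X ^ n + X ^ (n + j)) = (\<Prod>j<n. X ^ n * (1 + X ^ j))"
    by (rule prod.cong[OF refl]) (simp add: distrib_left power_add)
  also have "\<dots> = X ^ (n * n) * (\<Prod>j<Suc (n - 1). 1 + X ^ j)"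
    using assms unfolding prod.distrib by (simp add: power_mult[symmetric] mult.commute)
  also have "(\<Prod>j<Suc (n - 1). 1 + X ^ j) = 2 * plus_prod (n - 1)"
    unfolding plus_prod_def prod.lessThan_Suc_shift by simp
  finally show ?thesis by (simp add: power_add mult_ac)
qed

lemma plus_prod_product:
  assumes "n \<ge> 1"
  shows "2 * plus_prod n * plus_prod (n - 1) = (\<Sum>k\<le>2 * n. qbinomial X (2 * n) k * X ^ tri_offset n k)"
proof -
  let ?c = "n * (n - 1) div 2 + n * n"
  have "X ^ ?c * (2 * plus_prod n * plus_prod (n - 1)) = (\<Prod>j<2 * n. X ^ n + 1 * X ^ j)"
    using prod_tri_shift[OF assms] by simp
  also have "\<dots> = (\<Sum>k\<le>2 * n. qbinomial X (2 * n) k * X ^ (k * (k - 1) div 2) * 1 ^ k * (X ^ n) ^ (2 * n - k))"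
    by (rule cauchy_binomial)
  also have "\<dots> = (\<Sum>k\<le>2 * n. X ^ ?c * (qbinomial X (2 * n) k * X ^ tri_offset n k))"
  proof (rule sum.cong[OF refl])
    fix k assume "k \<in> {..2 * n}"
    then have "k * (k - 1) div 2 + n * (2 * n - k) = ?c + tri_offset n k"
      using tri_offset_exponent by simp
    then show "qbinomial X (2 * n) k * X ^ (k * (k - 1) div 2) * 1 ^ k * (X ^ n) ^ (2 * n - k)
       = X ^ ?c * (qbinomial X (2 * n) k * X ^ tri_offset n k)"
      by (simp add: power_mult[symmetric] power_add[symmetric] mult_ac)
  qed
  finally have "X ^ ?c * (2 * plus_prod n * plus_prod (n - 1))
      = X ^ ?c * (\<Sum>k\<le>2 * n. qbinomial X (2 * n) k * X ^ tri_offset n k)"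
    by (simp only: sum_distrib_left)
  then show ?thesis by simp
qed

lemma euler_prod_double: "euler_prod k (2 * n) = minus_odd_prod k n * euler_prod (2 * k) n"
proof (induction n)
  case 0
  then show ?case by (simp add: minus_odd_prod_def euler_prod_def)
next
  case (Suc n)
  have "euler_prod k (2 * Suc n)
      = euler_prod k (2 * n) * (1 - X ^ ((2 * n + 1) * k)) * (1 - X ^ ((2 * n + 2) * k))"
    by (simp add: euler_prod_Suc mult.assoc)
  also have "\<dots> = minus_odd_prod k (Suc n) * euler_prod (2 * k) (Suc n)"
    using Suc by (simp add: euler_prod_Suc minus_odd_prod_def algebra_simps)
  finally show ?case .
qed

lemma plus_odd_prod_euler_prod:
  "plus_odd_prod n * euler_prod 1 (2 * n) * euler_prod 4 n = euler_prod 2 (2 * n) * euler_prod 2 n"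
proof -
  have "plus_odd_prod n * minus_odd_prod 1 n = minus_odd_prod 2 n"
    unfolding plus_odd_prod_def minus_odd_prod_def prod.distrib[symmetric]
    by (rule prod.cong[OF refl])
      (simp add: algebra_simps power_mult[symmetric] power_add[symmetric] mult_2_right)
  then show ?thesis
    using euler_prod_double[of 1 n] euler_prod_double[of 2 n] by (simp add: mult_ac)
qed

lemma plus_prod_euler_prod: "plus_prod n * euler_prod 1 n = euler_prod 2 n"
  unfolding plus_prod_def euler_prod_lessThan prod.distrib[symmetric]
  by (rule prod.cong[OF refl])
    (simp add: algebra_simps power_mult[symmetric] power_add[symmetric] mult_2_right)

lemma plus_odd_prod_agree:
  assumes "M \<le> n"
  shows "fps_agree M (plus_odd_prod n) (f 2 ^ 2 * inverse (f 1 * f 4))"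
proof -
  have "fps_agree M (plus_odd_prod n * euler_prod 1 (2 * n) * euler_prod 4 n) (plus_odd_prod n * f 1 * f 4)"
    using assms by (intro fps_agree_mult fps_agree_refl euler_prod_agree_f) auto
  moreover have "fps_agree M (euler_prod 2 (2 * n) * euler_prod 2 n) (f 2 * f 2)"
    using assms by (intro fps_agree_mult euler_prod_agree_f) auto
  ultimately have "fps_agree M (plus_odd_prod n * f 1 * f 4) (f 2 * f 2)"
    using plus_odd_prod_euler_prod fps_agree_sym fps_agree_trans by metis
  then have "fps_agree M (plus_odd_prod n * (f 1 * f 4)) (f 2 ^ 2)"
    by (simp add: mult.assoc power2_eq_square)
  then show ?thesis by (rule fps_agree_cancel) simp
qed

lemma plus_prod_agree:
  assumes "M \<le> n"
  shows "fps_agree M (plus_prod n) (f 2 * inverse (f 1))"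
proof -
  have "fps_agree M (plus_prod n * euler_prod 1 n) (plus_prod n * f 1)"
    using assms by (intro fps_agree_mult fps_agree_refl euler_prod_agree_f) auto
  moreover have "fps_agree M (euler_prod 2 n) (f 2)"
    using assms by (intro euler_prod_agree_f) auto
  ultimately have "fps_agree M (plus_prod n * f 1) (f 2)"
    using plus_prod_euler_prod fps_agree_sym fps_agree_trans by metis
  then show ?thesis by (rule fps_agree_cancel) simp
qed

lemma qbinomial_mult_f_agree:
  assumes "d \<ge> 1" "k \<le> N" "M \<le> k" "M \<le> N - k"
  shows "fps_agree M (qbinomial (X ^ d) N k * f d) 1"
proof -
  have "qbinomial (X ^ d) N k * euler_prod d k * euler_prod d (N - k) = euler_prod d N"
    using qbinomial_qfact[OF assms(2), of "X ^ d"] by (simp add: qfact_X_power)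
  moreover have "fps_agree M (qbinomial (X ^ d) N k * euler_prod d k * euler_prod d (N - k))
                             (qbinomial (X ^ d) N k * f d * f d)"
    using assms by (intro fps_agree_mult fps_agree_refl euler_prod_agree_f) auto
  moreover have "fps_agree M (euler_prod d N) (f d)"
    using assms by (intro euler_prod_agree_f) auto
  ultimately have "fps_agree M (qbinomial (X ^ d) N k * f d * f d) (f d)"
    by (metis fps_agree_sym fps_agree_trans)
  then have "fps_agree M (qbinomial (X ^ d) N k * f d) (f d * inverse (f d))"
    using assms(1) by (intro fps_agree_cancel) auto
  then show ?thesis using f_mult_inverse[OF assms(1)] by simp
qed

lemma f_mult_qbinomial_sum_agree:
  assumes "d \<ge> 1" and large: "\<And>k. k \<le> N \<Longrightarrow> e k < M \<Longrightarrow> M \<le> k \<and> M \<le> N - k"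
  shows "fps_agree M (f d * (\<Sum>k\<le>N. qbinomial (X ^ d) N k * X ^ e k)) (\<Sum>k\<le>N. X ^ e k)"
  unfolding sum_distrib_left
proof (rule fps_agree_sum)
  fix k assume k: "k \<in> {..N}"
  have eq: "f d * (qbinomial (X ^ d) N k * X ^ e k) = X ^ e k * (qbinomial (X ^ d) N k * f d)"
    by (simp only: mult_ac)
  show "fps_agree M (f d * (qbinomial (X ^ d) N k * X ^ e k)) (X ^ e k)"
  proof (cases "e k < M")
    case True
    then have "fps_agree M (qbinomial (X ^ d) N k * f d) 1"
      using assms k by (intro qbinomial_mult_f_agree) auto
    then have "fps_agree M (X ^ e k * (qbinomial (X ^ d) N k * f d)) (X ^ e k * 1)"
      by (intro fps_agree_mult fps_agree_refl)
    then show ?thesis unfolding eq by simp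
  next
    case False
    then have "fps_agree M (X ^ e k * (qbinomial (X ^ d) N k * f d)) 0"
      and "fps_agree M (X ^ e k * 1) 0"
      by (intro fps_agree_X_power_mult_zero, simp)+
    then show ?thesis
      unfolding eq by (metis fps_agree_sym fps_agree_trans mult_1_right)
  qed
qed

lemma sum_X_power_nth: "finite S \<Longrightarrow> (\<Sum>k\<in>S. X ^ e k) $ m = of_nat (card {k\<in>S. e k = m})"
  by (simp add: fps_sum_nth eq_commute sum.inter_filter[symmetric])

lemma card_shifted_solutions:
  assumes "\<And>i. P i \<Longrightarrow> \<bar>i\<bar> \<le> int n"
  shows "card {k\<in>{..2 * n}. P (int k - int n)} = card {i::int. P i}"
proof -
  let ?h = "\<lambda>i. nat (i + int n)"
  have "inj_on ?h {i. P i}"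
  proof (rule inj_onI)
    fix x y assume "x \<in> {i. P i}" "y \<in> {i. P i}" "?h x = ?h y"
    moreover have "x + int n \<ge> 0" "y + int n \<ge> 0"
      using assms calculation by (force simp: abs_le_iff)+
    ultimately show "x = y" by simp
  qed
  moreover have "?h ` {i. P i} = {k\<in>{..2 * n}. P (int k - int n)}"
  proof (intro set_eqI iffI)
    fix k assume "k \<in> ?h ` {i. P i}"
    then obtain i where "P i" "k = ?h i" by blast
    moreover have "- int n \<le> i" "i \<le> int n" using assms[OF \<open>P i\<close>] by (simp_all add: abs_le_iff)
    ultimately show "k \<in> {k\<in>{..2 * n}. P (int k - int n)}" by simp
  next
    fix k assume "k \<in> {k\<in>{..2 * n}. P (int k - int n)}"
    then have "P (int k - int n)" "k = ?h (int k - int n)" by simp_all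
    then show "k \<in> ?h ` {i. P i}" by blast
  qed
  ultimately show ?thesis by (metis card_image)
qed

lemma sum_sq_offset_agree:
  assumes "M \<le> n"
  shows "fps_agree M (\<Sum>k\<le>2 * n. X ^ sq_offset n k) theta_sq"
  unfolding fps_agree_def
proof (intro allI impI)
  fix m assume "m < M"
  have "{k\<in>{..2 * n}. sq_offset n k = m} = {k\<in>{..2 * n}. (int k - int n) ^ 2 = int m}"
    by (auto simp: sq_offset_def)
  also have "card \<dots> = card {i::int. i ^ 2 = int m}"
  proof (rule card_shifted_solutions)
    fix i :: int assume "i ^ 2 = int m"
    then show "\<bar>i\<bar> \<le> int n" using abs_le_square[of i] \<open>m < M\<close> assms by linarith
  qed
  finally show "(\<Sum>k\<le>2 * n. X ^ sq_offset n k) $ m = theta_sq $ m"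
    by (simp add: sum_X_power_nth theta_sq_def)
qed

lemma sum_tri_offset_agree:
  assumes "2 * M \<le> n"
  shows "fps_agree M (\<Sum>k\<le>2 * n. X ^ tri_offset n k) theta_tri"
  unfolding fps_agree_def
proof (intro allI impI)
  fix m assume "m < M"
  have "tri_offset n k = m \<longleftrightarrow> (int k - int n) * (int k - int n - 1) = 2 * int m" for k
    using two_mult_tri_offset[of n k] by linarith
  then have "{k\<in>{..2 * n}. tri_offset n k = m}
      = {k\<in>{..2 * n}. (int k - int n) * (int k - int n - 1) = 2 * int m}"
    by blast
  also have "card \<dots> = card {i::int. i * (i - 1) = 2 * int m}"
  proof (rule card_shifted_solutions)
    fix i :: int assume "i * (i - 1) = 2 * int m"
    then show "\<bar>i\<bar> \<le> int n" using abs_le_mult_pred_plus_1[of i] \<open>m < M\<close> assms by linarith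
  qed
  finally show "(\<Sum>k\<le>2 * n. X ^ tri_offset n k) $ m = theta_tri $ m"
    by (simp add: sum_X_power_nth theta_tri_def)
qed

theorem theta_sq_eq: "theta_sq = f 2 ^ 5 / (f 1 ^ 2 * f 4 ^ 2)"
proof (rule fps_agree_imp_eq)
  fix M :: nat
  define n where "n = 2 * M + 1"
  have "n \<ge> 1" "M \<le> n" by (simp_all add: n_def)
  have "fps_agree M (f 2 * plus_odd_prod n ^ 2) (\<Sum>k\<le>2 * n. X ^ sq_offset n k)"
    unfolding plus_odd_prod_square[OF \<open>n \<ge> 1\<close>]
  proof (rule f_mult_qbinomial_sum_agree)
    fix k assume "k \<le> 2 * n" "sq_offset n k < M"
    moreover have "\<bar>int k - int n\<bar> \<le> int (sq_offset n k)"
      using abs_le_square[of "int k - int n"] by (simp add: sq_offset_def)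
    ultimately have "int M \<le> int k" "int M + int k \<le> 2 * int n"
      by (simp_all add: n_def abs_le_iff)
    then show "M \<le> k \<and> M \<le> 2 * n - k" by linarith
  qed simp
  then have "fps_agree M theta_sq (f 2 * plus_odd_prod n ^ 2)"
    using sum_sq_offset_agree[OF \<open>M \<le> n\<close>] by (blast intro: fps_agree_sym fps_agree_trans)
  moreover have "fps_agree M (f 2 * plus_odd_prod n ^ 2) (f 2 * (f 2 ^ 2 * inverse (f 1 * f 4)) ^ 2)"
    using \<open>M \<le> n\<close> by (intro fps_agree_mult fps_agree_power fps_agree_refl plus_odd_prod_agree)
  moreover have "f 2 * (f 2 ^ 2 * inverse (f 1 * f 4)) ^ 2 = f 2 ^ 5 / (f 1 ^ 2 * f 4 ^ 2)"
    by (simp add: fps_divide_unit fps_inverse_mult fps_inverse_power power_mult_distrib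
        flip: power_add power_mult power_Suc)
  ultimately show "fps_agree M theta_sq (f 2 ^ 5 / (f 1 ^ 2 * f 4 ^ 2))"
    by (metis fps_agree_trans)
qed

theorem theta_tri_eq: "theta_tri = 2 * f 2 ^ 2 / f 1"
proof (rule fps_agree_imp_eq)
  fix M :: nat
  define n where "n = 3 * M + 1"
  have "n \<ge> 1" "2 * M \<le> n" "M \<le> n - 1" by (simp_all add: n_def)
  have "fps_agree M (f 1 * (2 * plus_prod n * plus_prod (n - 1))) (\<Sum>k\<le>2 * n. X ^ tri_offset n k)"
    unfolding plus_prod_product[OF \<open>n \<ge> 1\<close>]
  proof (rule f_mult_qbinomial_sum_agree[of 1, unfolded power_one_right])
    fix k assume "k \<le> 2 * n" "tri_offset n k < M"
    moreover have "\<bar>int k - int n\<bar> \<le> 2 * int (tri_offset n k) + 1"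
      using abs_le_mult_pred_plus_1[of "int k - int n"] two_mult_tri_offset[of n k] by linarith
    ultimately have "int M \<le> int k" "int M + int k \<le> 2 * int n"
      by (simp_all add: n_def abs_le_iff)
    then show "M \<le> k \<and> M \<le> 2 * n - k" by linarith
  qed simp
  then have "fps_agree M theta_tri (f 1 * (2 * plus_prod n * plus_prod (n - 1)))"
    using sum_tri_offset_agree[OF \<open>2 * M \<le> n\<close>] by (blast intro: fps_agree_sym fps_agree_trans)
  moreover have "fps_agree M (f 1 * (2 * plus_prod n * plus_prod (n - 1)))
                             (f 1 * (2 * (f 2 * inverse (f 1)) * (f 2 * inverse (f 1))))"
    using \<open>M \<le> n - 1\<close> by (intro fps_agree_mult fps_agree_refl plus_prod_agree) simp_all
  moreover have "f 1 * (2 * (f 2 * inverse (f 1)) * (f 2 * inverse (f 1))) = 2 * f 2 ^ 2 / f 1"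
    by (simp add: fps_divide_unit f_mult_inverse power2_eq_square mult_ac)
  ultimately show "fps_agree M theta_tri (2 * f 2 ^ 2 / f 1)"
    by (metis fps_agree_trans)
qed


section \<open>Dissections\<close>

lemma card_sq_eq_4_mult: "card {i::int. i ^ 2 = int (4 * m)} = card {j::int. j ^ 2 = int m}"
proof -
  have "{i::int. i ^ 2 = int (4 * m)} = (\<lambda>j. 2 * j) ` {j::int. j ^ 2 = int m}"
  proof (intro set_eqI iffI)
    fix i assume "i \<in> {i::int. i ^ 2 = int (4 * m)}"
    then have i: "i ^ 2 = 4 * int m" by simp
    then have "even (i ^ 2)" by simp
    then obtain j where j: "i = 2 * j" by auto
    then have "j ^ 2 = int m" using i by (simp add: power_mult_distrib)
    then show "i \<in> (\<lambda>j. 2 * j) ` {j::int. j ^ 2 = int m}" using j by blast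
  qed (auto simp: power_mult_distrib)
  moreover have "inj_on (\<lambda>j::int. 2 * j) {j::int. j ^ 2 = int m}" by (rule inj_onI) simp
  ultimately show ?thesis by (simp add: card_image)
qed

lemma card_sq_eq_8_mult_plus_1:
  "card {i::int. i ^ 2 = int (8 * m + 1)} = card {j::int. j * (j - 1) = 2 * int m}"
proof -
  have sq: "(2 * j - 1) ^ 2 = 4 * (j * (j - 1)) + (1::int)" for j
    by (simp add: power2_eq_square algebra_simps)
  have "{i::int. i ^ 2 = int (8 * m + 1)} = (\<lambda>j. 2 * j - 1) ` {j::int. j * (j - 1) = 2 * int m}"
  proof (intro set_eqI iffI)
    fix i assume "i \<in> {i::int. i ^ 2 = int (8 * m + 1)}"
    then have i: "i ^ 2 = 8 * int m + 1" by simp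
    then have "odd (i ^ 2)" by simp
    then have "odd i" by simp
    then obtain k where "i = 2 * k + 1" by (rule oddE)
    then have j: "i = 2 * (k + 1) - 1" by simp
    define j where "j = k + 1"
    have "j * (j - 1) = 2 * int m" using i sq[of j] j unfolding j_def by simp
    then show "i \<in> (\<lambda>j. 2 * j - 1) ` {j::int. j * (j - 1) = 2 * int m}" using j unfolding j_def by blast
  qed (auto simp: sq)
  moreover have "inj_on (\<lambda>j::int. 2 * j - 1) {j::int. j * (j - 1) = 2 * int m}" by (rule inj_onI) simp
  ultimately show ?thesis by (simp add: card_image)
qed

lemma square_mod_8: "\<not> 4 dvd n \<Longrightarrow> n mod 8 \<noteq> 1 \<Longrightarrow> {i::int. i ^ 2 = int n} = {}"
proof (rule ccontr)
  assume "\<not> 4 dvd n" "n mod 8 \<noteq> 1" "{i::int. i ^ 2 = int n} \<noteq> {}"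
  then obtain i where i: "i ^ 2 = int n" by auto
  show False
  proof (cases "even i")
    case True
    then obtain j where "i = 2 * j" by blast
    then have "int n = 4 * j ^ 2" using i by (simp add: power_mult_distrib)
    then show False using \<open>\<not> 4 dvd n\<close> by presburger
  next
    case False
    then obtain j where j: "i = 2 * j + 1" using oddE by blast
    have "even (j * (j + 1))" by simp
    then obtain t where t: "j * (j + 1) = 2 * t" by blast
    have "i ^ 2 = 4 * (j * (j + 1)) + 1" using j by (simp add: power2_eq_square algebra_simps)
    then have "int n = 8 * t + 1" using i t by simp
    then show False using \<open>n mod 8 \<noteq> 1\<close> by presburger
  qed
qed

theorem theta_sq_dissection: "theta_sq = dilate (dilate theta_sq) + X * dilate (dilate (dilate theta_tri))"
proof (rule fps_ext)
  fix n :: nat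
  consider "4 dvd n" | "n mod 8 = 1" | "\<not> 4 dvd n" "n mod 8 \<noteq> 1" by blast
  then show "theta_sq $ n = (dilate (dilate theta_sq) + X * dilate (dilate (dilate theta_tri))) $ n"
  proof cases
    case 1
    then obtain m where "n = 4 * m" by blast
    moreover have "n mod 8 \<noteq> 1" using \<open>n = 4 * m\<close> by presburger
    ultimately show ?thesis
      using card_sq_eq_4_mult[of m]
      by (simp only: fps_add_nth dilate_dilate_nth X_mult_dilate3_nth) (simp add: theta_sq_def)
  next
    case 2
    then obtain m where m: "n = 8 * m + 1" by (metis div_mod_decomp mult.commute)
    moreover have "\<not> 4 dvd n" "n div 8 = m" using m by presburger+
    ultimately show ?thesis
      using card_sq_eq_8_mult_plus_1[of m]
      by (simp only: fps_add_nth dilate_dilate_nth X_mult_dilate3_nth)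
        (simp add: theta_sq_def theta_tri_def)
  next
    case 3
    then show ?thesis
      using square_mod_8[OF 3]
      by (simp only: fps_add_nth dilate_dilate_nth X_mult_dilate3_nth) (simp add: theta_sq_def)
  qed
qed

lemma fraction_eq_eta_quot:
  "theta_sq = eta_quot (-2, 5, -2, 0, 0)" "theta_tri = 2 * eta_quot (-1, 2, 0, 0, 0)"
  unfolding theta_sq_eq theta_tri_eq f_eq_eta_quot eta_quot_power eta_quot_mult divide_eta_quot
  by (simp_all add: mult.assoc eta_quot_mult)

text \<open>\<open>\<phi>(q) = \<phi>(q\<^sup>4) + 2q\<psi>(q\<^sup>8)\<close> in eta quotients.\<close>
lemma theta_sq_dissection_eta:
  "eta_quot (-2, 5, -2, 0, 0) = eta_quot (0, 0, -2, 5, -2) + 2 * X * eta_quot (0, 0, 0, -1, 2)"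
  using theta_sq_dissection unfolding fraction_eq_eta_quot
  by (simp add: dilate_eta_quot dilate_mult mult.assoc)

lemma inverse_f1_square_dissection:
  "eta_quot (-2, 0, 0, 0, 0)
     = dilate (eta_quot (-5, 0, 5, -2, 0)) + 2 * X * dilate (eta_quot (-5, 2, -1, 2, 0))"
proof -
  have "eta_quot (-2, 0, 0, 0, 0) = eta_quot (0, -5, 2, 0, 0) * eta_quot (-2, 5, -2, 0, 0)"
    by (simp add: eta_quot_mult)
  also have "\<dots> = eta_quot (0, -5, 2, 0, 0) * eta_quot (0, 0, -2, 5, -2)
                 + 2 * X * (eta_quot (0, -5, 2, 0, 0) * eta_quot (0, 0, 0, -1, 2))"
    unfolding theta_sq_dissection_eta by (simp add: algebra_simps)
  finally show ?thesis
    by (simp add: eta_quot_mult dilate_eta_quot)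
qed

text \<open>\<open>\<phi>(q)\<^sup>2 = \<phi>(q\<^sup>2)\<^sup>2 + 4q\<psi>(q\<^sup>4)\<^sup>2\<close>: squaring the dissection of \<open>\<phi>\<close> shows that the
  difference \<open>\<Delta>\<close> of the two sides satisfies \<open>\<Delta>(q) = -\<Delta>(q\<^sup>2)\<close>.\<close>
lemma theta_sq_square_dissection_eta:
  "eta_quot (-4, 10, -4, 0, 0) = eta_quot (0, -4, 10, -4, 0) + 4 * X * eta_quot (0, 0, -2, 4, 0)"
proof -
  define a where "a = eta_quot (0, 0, -2, 5, -2)"
  define b where "b = eta_quot (0, 0, 0, -1, 2)"
  have sq: "eta_quot (-4, 10, -4, 0, 0) = a * a + 4 * X * (a * b) + 4 * X ^ 2 * (b * b)"
  proof -
    have "eta_quot (-4, 10, -4, 0, 0) = eta_quot (-2, 5, -2, 0, 0) * eta_quot (-2, 5, -2, 0, 0)"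
      by (simp add: eta_quot_mult)
    also have "\<dots> = (a + 2 * X * b) * (a + 2 * X * b)"
      unfolding theta_sq_dissection_eta a_def b_def ..
    finally show ?thesis by (simp add: algebra_simps power2_eq_square)
  qed
  have ab: "a * b = eta_quot (0, 0, -2, 4, 0)" "a * a = eta_quot (0, 0, -4, 10, -4)"
    "b * b = eta_quot (0, 0, 0, -2, 4)"
    by (simp_all add: a_def b_def eta_quot_mult)
  define \<Delta> where "\<Delta> = eta_quot (-4, 10, -4, 0, 0) - eta_quot (0, -4, 10, -4, 0) - 4 * X * eta_quot (0, 0, -2, 4, 0)"
  have "dilate \<Delta> = eta_quot (0, -4, 10, -4, 0) - eta_quot (0, 0, -4, 10, -4) - 4 * X ^ 2 * eta_quot (0, 0, 0, -2, 4)"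
    unfolding \<Delta>_def by (simp add: dilate_diff dilate_mult dilate_eta_quot dilate_X)
  then have "\<Delta> = - dilate \<Delta>"
    unfolding \<Delta>_def sq ab by (simp add: algebra_simps)
  then have "\<Delta> = 0" by (rule eq_neg_dilate_imp_zero)
  then show ?thesis unfolding \<Delta>_def by (simp add: algebra_simps)
qed

lemma inverse_f1_fourth_dissection:
  "eta_quot (-4, 0, 0, 0, 0)
     = dilate (eta_quot (-14, 14, -4, 0, 0)) + 4 * X * dilate (eta_quot (-10, 2, 4, 0, 0))"
proof -
  have "eta_quot (-4, 0, 0, 0, 0) = eta_quot (0, -10, 4, 0, 0) * eta_quot (-4, 10, -4, 0, 0)"
    by (simp add: eta_quot_mult)
  also have "\<dots> = eta_quot (0, -10, 4, 0, 0) * eta_quot (0, -4, 10, -4, 0)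
                 + 4 * X * (eta_quot (0, -10, 4, 0, 0) * eta_quot (0, 0, -2, 4, 0))"
    unfolding theta_sq_square_dissection_eta by (simp add: algebra_simps)
  finally show ?thesis
    by (simp add: eta_quot_mult dilate_eta_quot)
qed


section \<open>Reduction modulo 128\<close>

lemma dilate_eta_quot_mult: "dilate (eta_quot v) * dilate (eta_quot w) = dilate (eta_quot (v + w))"
  by (simp add: dilate_mult[symmetric] eta_quot_mult)

lemma int_coeffs_dilate_eta_quot: "int_coeffs (dilate (eta_quot v))"
  by (simp add: int_coeffs_dilate int_coeffs_eta_quot)

definition binomial_exponent :: "nat \<Rightarrow> nat \<Rightarrow> eta_exponent" where
  "binomial_exponent m j =
     exponent_scale (int m - int j) (-14, 14, -4, 0, 0) + exponent_scale (int j) (-10, 2, 4, 0, 0)"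

definition binomial_term :: "nat \<Rightarrow> nat \<Rightarrow> rat fps" where
  "binomial_term m j = of_int (int (m choose j) * 4 ^ j) * X ^ j * dilate (eta_quot (binomial_exponent m j))"

lemma binomial_term_eq:
  "of_nat (m choose k) * (4 * X * dilate (eta_quot (-10, 2, 4, 0, 0))) ^ k
     * dilate (eta_quot (-14, 14, -4, 0, 0)) ^ (m - k) = binomial_term m k"
proof (cases "k \<le> m")
  case True
  have "dilate (eta_quot (-10, 2, 4, 0, 0)) ^ k * dilate (eta_quot (-14, 14, -4, 0, 0)) ^ (m - k)
      = dilate (eta_quot (binomial_exponent m k))"
    using True
    by (simp add: dilate_power[symmetric] eta_quot_power dilate_eta_quot_mult binomial_exponent_def
        of_nat_diff add.commute)
  then show ?thesis
    unfolding binomial_term_def by (simp add: power_mult_distrib mult_ac)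
next
  case False
  then show ?thesis by (simp add: binomial_term_def)
qed

text \<open>In the binomial expansion of the dissection of \<open>1/f\<^sub>1\<^sup>4\<close>, the \<open>j\<close>-th term carries the factor
  \<open>4\<^sup>j\<close>, which vanishes modulo 128 for \<open>j \<ge> 4\<close>.\<close>
lemma inverse_f1_fourth_power_cong:
  "fps_cong (eta_quot (-4, 0, 0, 0, 0) ^ m) (\<Sum>j<4. binomial_term m j) 128"
proof -
  have "eta_quot (-4, 0, 0, 0, 0) ^ m
      = (4 * X * dilate (eta_quot (-10, 2, 4, 0, 0)) + dilate (eta_quot (-14, 14, -4, 0, 0))) ^ m"
    unfolding inverse_f1_fourth_dissection by (simp only: add.commute)
  also have "\<dots> = (\<Sum>k\<le>m. binomial_term m k)"
    unfolding binomial_ring by (rule sum.cong[OF refl binomial_term_eq])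
  also have "\<dots> = (\<Sum>k\<in>{..m} \<inter> {..<4}. binomial_term m k) + (\<Sum>k\<in>{..m} - {..<4}. binomial_term m k)"
    by (metis sum.Int_Diff finite_atMost)
  also have "(\<Sum>k\<in>{..m} \<inter> {..<4}. binomial_term m k) = (\<Sum>j<4. binomial_term m j)"
    by (rule sum.mono_neutral_left) (auto simp: binomial_term_def)
  finally have eq: "eta_quot (-4, 0, 0, 0, 0) ^ m
      = (\<Sum>j<4. binomial_term m j) + (\<Sum>k\<in>{..m} - {..<4}. binomial_term m k)" .
  have "fps_cong (\<Sum>k\<in>{..m} - {..<4}. binomial_term m k) 0 128"
  proof (rule fps_cong_sum_zero)
    fix k assume "k \<in> {..m} - {..<4}"
    then have "k = 4 + (k - 4)" by simp
    then have "(4::int) ^ k = 4 ^ 4 * 4 ^ (k - 4)"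
      by (metis power_add)
    then have "128 dvd int (m choose k) * 4 ^ k" by simp
    then show "fps_cong (binomial_term m k) 0 128"
      unfolding binomial_term_def mult.assoc
      by (intro fps_cong_multiple_zero int_coeffs_mult int_coeffs_dilate_eta_quot) auto
  qed
  then show ?thesis
    using eq fps_cong_add[OF fps_cong_refl] by (metis add.right_neutral)
qed


text \<open>A list of triples \<open>(c, t, v)\<close> stands for the series \<open>\<Sum> c q\<^sup>t eta_quot v\<close>.\<close>
type_synonym eta_terms = "(int \<times> nat \<times> eta_exponent) list"

definition eval_terms :: "eta_terms \<Rightarrow> rat fps" where
  "eval_terms ts = sum_list (map (\<lambda>(c, t, v). of_int c * X ^ t * eta_quot v) ts)"

definition eval_dilated_terms :: "eta_terms \<Rightarrow> rat fps" where
  "eval_dilated_terms ts = sum_list (map (\<lambda>(c, t, v). of_int c * X ^ t * dilate (eta_quot v)) ts)"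

lemma eval_terms_simps [simp]:
  "eval_terms [] = 0"
  "eval_terms ((c, t, v) # ts) = of_int c * X ^ t * eta_quot v + eval_terms ts"
  by (simp_all add: eval_terms_def)

lemma eval_dilated_terms_simps [simp]:
  "eval_dilated_terms [] = 0"
  "eval_dilated_terms ((c, t, v) # ts) = of_int c * X ^ t * dilate (eta_quot v) + eval_dilated_terms ts"
  "eval_dilated_terms (ts @ us) = eval_dilated_terms ts + eval_dilated_terms us"
  by (simp_all add: eval_dilated_terms_def)

lemma eval_dilated_terms_concat: "eval_dilated_terms (concat tss) = sum_list (map eval_dilated_terms tss)"
  by (induction tss) auto

text \<open>The \<open>j\<close>-th term of \<open>inverse_f1_fourth_power_cong\<close>, multiplied by \<open>c q\<^sup>s dilate (eta_quot base)\<close>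
  and, if \<open>odd_half\<close> holds, by the dissection of \<open>1/f\<^sub>1\<^sup>2\<close>.\<close>
fun binomial_terms :: "int \<Rightarrow> nat \<Rightarrow> nat \<Rightarrow> eta_exponent \<Rightarrow> bool \<Rightarrow> nat \<Rightarrow> eta_terms" where
  "binomial_terms c s m base odd_half j =
     (let c' = c * int (m choose j) * 4 ^ j; v = binomial_exponent m j + base in
      if odd_half then [(c', s + j, v + (-5, 0, 5, -2, 0)), (2 * c', s + j + 1, v + (-5, 2, -1, 2, 0))]
      else [(c', s + j, v)])"

text \<open>For \<open>a = -(4m + 2\<epsilon>)\<close> with \<open>\<epsilon> \<in> {0, 1}\<close>, \<open>f\<^sub>1\<^sup>a\<close> is the \<open>m\<close>-th power of \<open>1/f\<^sub>1\<^sup>4\<close> times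
  \<open>(1/f\<^sub>1\<^sup>2)\<^sup>\<epsilon>\<close>; the remaining factors \<open>f\<^sub>2\<^sup>b f\<^sub>4\<^sup>c f\<^sub>8\<^sup>d\<close> are already dilated.\<close>
fun expand_term :: "int \<times> nat \<times> eta_exponent \<Rightarrow> eta_terms" where
  "expand_term (c, s, (a, b, c4, d, e)) =
     (let n = nat (- a); m = n div 4; odd_half = (n mod 4 = 2) in
      concat (map (binomial_terms c s m (b, c4, d, 0, 0) odd_half) [0, 1, 2, 3]))"

fun expandable :: "int \<times> nat \<times> eta_exponent \<Rightarrow> bool" where
  "expandable (c, s, (a, b, c4, d, e)) \<longleftrightarrow> a \<le> 0 \<and> even a \<and> e = 0"

definition expand_terms :: "eta_terms \<Rightarrow> eta_terms" where
  "expand_terms ts = concat (map expand_term ts)"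

lemma eval_binomial_terms:
  "eval_dilated_terms (binomial_terms c s m base odd_half j) =
     of_int c * X ^ s * binomial_term m j * (if odd_half then eta_quot (-2, 0, 0, 0, 0) else 1)
       * dilate (eta_quot base)"
  unfolding inverse_f1_square_dissection
  by (simp add: Let_def binomial_term_def power_add algebra_simps flip: dilate_eta_quot_mult)

lemma sum_lessThan_4: "(\<Sum>j<(4::nat). g j) = g 0 + g 1 + g 2 + (g 3 :: 'a::comm_monoid_add)"
  by (simp add: eval_nat_numeral)

lemma expand_term_cong:
  assumes "a \<le> 0" "even a"
  shows "fps_cong (of_int c * X ^ s * eta_quot (a, b, c4, d, 0))
                  (eval_dilated_terms (expand_term (c, s, (a, b, c4, d, 0)))) 128"
proof -
  define n where "n = nat (- a)"
  define m where "m = n div 4"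
  define odd_half where "odd_half = (n mod 4 = 2)"
  have "even n" using assms unfolding n_def by (simp add: even_nat_iff)
  then have "n mod 4 = 0 \<or> n mod 4 = 2" by presburger
  moreover have "n = 4 * m + n mod 4" unfolding m_def by simp
  ultimately have a: "a = - (4 * int m + (if odd_half then 2 else 0))"
    unfolding odd_half_def n_def using assms(1) by auto
  have split: "eta_quot (a, b, c4, d, 0) = eta_quot (-4, 0, 0, 0, 0) ^ m
      * (if odd_half then eta_quot (-2, 0, 0, 0, 0) else 1) * dilate (eta_quot (b, c4, d, 0, 0))"
  proof (cases odd_half)
    case True
    have "eta_quot (a, b, c4, d, 0)
        = eta_quot (exponent_scale (int m) (-4, 0, 0, 0, 0) + (-2, 0, 0, 0, 0) + (0, b, c4, d, 0))"
      by (rule arg_cong[where f = eta_quot]) (simp add: a True)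
    then show ?thesis
      using True by (simp only: eta_quot_mult[symmetric] eta_quot_power[symmetric] dilate_eta_quot if_True)
  next
    case False
    have "eta_quot (a, b, c4, d, 0) = eta_quot (exponent_scale (int m) (-4, 0, 0, 0, 0) + (0, b, c4, d, 0))"
      by (rule arg_cong[where f = eta_quot]) (simp add: a False)
    then show ?thesis
      using False
      by (simp only: eta_quot_mult[symmetric] eta_quot_power[symmetric] dilate_eta_quot if_False
          mult_1_right)
  qed
  define R where "R = of_int c * X ^ s * (if odd_half then eta_quot (-2, 0, 0, 0, 0) else 1)
                       * dilate (eta_quot (b, c4, d, 0, 0))"
  have R: "int_coeffs R"
    unfolding R_def by (auto intro!: int_coeffs_mult int_coeffs_dilate_eta_quot int_coeffs_eta_quot)
  have lhs: "of_int c * X ^ s * eta_quot (a, b, c4, d, 0) = R * eta_quot (-4, 0, 0, 0, 0) ^ m"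
    unfolding split R_def by (simp add: mult_ac)
  have rhs: "eval_dilated_terms (expand_term (c, s, (a, b, c4, d, 0))) = R * (\<Sum>j<4. binomial_term m j)"
    unfolding R_def expand_term.simps Let_def n_def[symmetric] m_def[symmetric] odd_half_def[symmetric]
      eval_dilated_terms_concat
    by (simp add: eval_binomial_terms sum_lessThan_4 algebra_simps del: binomial_terms.simps)
  show ?thesis
    unfolding lhs rhs by (intro fps_cong_mult_left inverse_f1_fourth_power_cong R)
qed

lemma expand_terms_cong:
  "list_all expandable ts \<Longrightarrow> fps_cong (eval_terms ts) (eval_dilated_terms (expand_terms ts)) 128"
proof (induction ts)
  case Nil
  then show ?case by (simp add: expand_terms_def)
next
  case (Cons x ts)
  obtain c s a b c4 d e where x: "x = (c, s, (a, b, c4, d, e))" by (cases x) auto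
  with Cons.prems have "a \<le> 0" "even a" "e = 0" by auto
  then show ?case
    using fps_cong_add[OF expand_term_cong Cons.IH] Cons.prems x by (simp add: expand_terms_def)
qed

definition even_terms :: "eta_terms \<Rightarrow> eta_terms" where
  "even_terms ts = map (\<lambda>(c, t, v). (c, t div 2, v)) (filter (\<lambda>(c, t, v). even t) ts)"

lemma even_part_eval_dilated_terms: "even_part (eval_dilated_terms ts) = eval_terms (even_terms ts)"
proof (induction ts)
  case Nil
  then show ?case by (simp add: even_terms_def even_part_def fps_eq_iff)
next
  case (Cons x ts)
  obtain c t v where "x = (c, t, v)" by (cases x) auto
  with Cons.IH show ?case
    by (simp add: even_terms_def even_part_add mult.assoc even_part_of_int_mult
        even_part_X_power_mult_dilate)
qed

definition term_coeff :: "eta_terms \<Rightarrow> nat \<times> eta_exponent \<Rightarrow> int" where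
  "term_coeff ts k = sum_list (map (\<lambda>(c, k'). if k' = k then c else 0) ts)"

fun term_monomial :: "nat \<times> eta_exponent \<Rightarrow> rat fps" where
  "term_monomial (t, v) = X ^ t * eta_quot v"

lemma eval_terms_collect:
  "finite K \<Longrightarrow> set (map snd ts) \<subseteq> K
     \<Longrightarrow> eval_terms ts = (\<Sum>k\<in>K. of_int (term_coeff ts k) * term_monomial k)"
proof (induction ts)
  case Nil
  then show ?case by (simp add: term_coeff_def)
next
  case (Cons x ts)
  obtain c t v where x: "x = (c, t, v)" by (cases x) auto
  have "(\<Sum>k\<in>K. of_int (term_coeff (x # ts) k) * term_monomial k) =
        (\<Sum>k\<in>K. (if (t, v) = k then of_int c * term_monomial k else 0))
        + (\<Sum>k\<in>K. of_int (term_coeff ts k) * term_monomial k)"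
    by (simp add: term_coeff_def x sum.distrib[symmetric] distrib_right) (intro sum.cong, auto)
  also have "(\<Sum>k\<in>K. (if (t, v) = k then of_int c * term_monomial k else 0)) = of_int c * term_monomial (t, v)"
    using Cons.prems x by (simp add: sum.delta)
  finally show ?case using Cons x by (simp add: mult.assoc)
qed

lemma eval_terms_cong:
  assumes "\<forall>k\<in>set (map snd (ts @ us)). term_coeff ts k mod 128 = term_coeff us k mod 128"
  shows "fps_cong (eval_terms ts) (eval_terms us) 128"
proof -
  let ?K = "set (map snd (ts @ us))"
  have "eval_terms ts - eval_terms us = (\<Sum>k\<in>?K. of_int (term_coeff ts k - term_coeff us k) * term_monomial k)"
    by (simp add: eval_terms_collect[of ?K ts] eval_terms_collect[of ?K us] sum_subtractf[symmetric]
        left_diff_distrib del: set_map term_monomial.simps)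
  moreover have "fps_cong (\<Sum>k\<in>?K. of_int (term_coeff ts k - term_coeff us k) * term_monomial k) 0 128"
  proof (rule fps_cong_sum_zero)
    fix k assume "k \<in> ?K"
    then have "128 dvd (term_coeff ts k - term_coeff us k)" using assms by (simp add: mod_eq_dvd_iff)
    moreover have "int_coeffs (term_monomial k)"
      by (cases k) (simp add: int_coeffs_mult int_coeffs_eta_quot)
    ultimately show "fps_cong (of_int (term_coeff ts k - term_coeff us k) * term_monomial k) 0 128"
      by (rule fps_cong_multiple_zero[rotated])
  qed
  ultimately have "fps_cong (eval_terms ts - eval_terms us) 0 128" by simp
  then show ?thesis by (simp add: fps_cong_diff_zero_iff)
qed

lemma even_part_eval_terms_cong:
  assumes "list_all expandable ts"
    and "\<forall>k\<in>set (map snd (even_terms (expand_terms ts) @ us)).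
           term_coeff (even_terms (expand_terms ts)) k mod 128 = term_coeff us k mod 128"
  shows "fps_cong (even_part (eval_terms ts)) (eval_terms us) 128"
proof -
  have "fps_cong (even_part (eval_terms ts)) (eval_terms (even_terms (expand_terms ts))) 128"
    using fps_cong_even_part[OF expand_terms_cong[OF assms(1)]] by (simp add: even_part_eval_dilated_terms)
  then show ?thesis using eval_terms_cong[OF assms(2)] by (rule fps_cong_trans)
qed


lemma choose_three: "n choose 3 = n * (n - 1) * (n - 2) div 6"
proof -
  have "6 * (n choose 3) = n * (n - 1) * (n - 2)"
  proof (induction n)
    case 0
    then show ?case by simp
  next
    case (Suc n)
    have "2 * (n choose 2) = n * (n - 1)"
      by (cases n) (simp_all add: choose_two)
    then have "6 * (Suc n choose 3) = 3 * (n * (n - 1)) + n * (n - 1) * (n - 2)"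
      using Suc by (simp add: numeral_3_eq_3 numeral_2_eq_2)
    also have "\<dots> = Suc n * (Suc n - 1) * (Suc n - 2)"
    proof (cases "n \<ge> 2")
      case True
      then obtain k where "n = k + 2" by (metis add.commute le_Suc_ex)
      then show ?thesis by (simp add: algebra_simps)
    next
      case False
      then have "n = 0 \<or> n = 1" by auto
      then show ?thesis by auto
    qed
    finally show ?case .
  qed
  then show ?thesis by simp
qed

text \<open>\<open>bt_terms k\<close> represents the series \<open>\<Sum> bt(k n) q\<^sup>n\<close> modulo 128 (exactly for \<open>k = 1\<close>).\<close>
definition bt_terms1 :: eta_terms where
  "bt_terms1 = [(1, 0, (-6, -3, 3, 0, 0))]"
definition bt_terms2 :: eta_terms where
  "bt_terms2 = [(1, 0, (-22, 17, 1, -2, 0)), (8, 1, (-18, 7, 3, 2, 0))]"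
definition bt_terms4 :: eta_terms where
  "bt_terms4 = [(32, 1, (-50, 47, -1, -2, 0)), (56, 1, (-54, 61, -15, 2, 0)), (1, 0, (-58, 71, -17, -2, 0))]"
definition bt_terms8 :: eta_terms where
  "bt_terms8 = [(32, 1, (-126, 169, -51, 2, 0)), (16, 1, (-122, 155, -37, -2, 0)),
                (1, 0, (-130, 179, -53, -2, 0))]"
definition bt_terms16 :: eta_terms where
  "bt_terms16 = [(96, 1, (-270, 385, -123, 2, 0)), (1, 0, (-274, 395, -125, -2, 0))]"
definition bt_terms32 :: eta_terms where
  "bt_terms32 = [(96, 1, (-554, 803, -253, -2, 0)), (96, 1, (-558, 817, -267, 2, 0)),
                 (1, 0, (-562, 827, -269, -2, 0))]"

lemmas expansion_simps = expand_terms_def even_terms_def term_coeff_def binomial_exponent_def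
  choose_three choose_two choose_one

lemma even_part_bt_terms1: "fps_cong (even_part (eval_terms bt_terms1)) (eval_terms bt_terms2) 128"
  by (rule even_part_eval_terms_cong) (simp_all add: bt_terms1_def bt_terms2_def expansion_simps)

lemma even_part_bt_terms2: "fps_cong (even_part (eval_terms bt_terms2)) (eval_terms bt_terms4) 128"
  by (rule even_part_eval_terms_cong) (simp_all add: bt_terms2_def bt_terms4_def expansion_simps)

lemma even_part_bt_terms4: "fps_cong (even_part (eval_terms bt_terms4)) (eval_terms bt_terms8) 128"
  by (rule even_part_eval_terms_cong) (simp_all add: bt_terms4_def bt_terms8_def expansion_simps)

lemma even_part_bt_terms8: "fps_cong (even_part (eval_terms bt_terms8)) (eval_terms bt_terms16) 128"
  by (rule even_part_eval_terms_cong) (simp_all add: bt_terms8_def bt_terms16_def expansion_simps)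

lemma even_part_bt_terms16: "fps_cong (even_part (eval_terms bt_terms16)) (eval_terms bt_terms32) 128"
  by (rule even_part_eval_terms_cong) (simp_all add: bt_terms16_def bt_terms32_def expansion_simps)

lemmas eta_quot_normalize = f_eq_eta_quot eta_quot_power eta_quot_mult divide_eta_quot

lemma bt_gf_eq: "bt_gf = eval_terms bt_terms1"
  unfolding bt_gf_def bt_terms1_def eta_quot_normalize by simp

lemma bt_dilation_even_part: "Abs_fps (\<lambda>n. bt (2 * k * n)) = even_part (Abs_fps (\<lambda>n. bt (k * n)))"
  by (simp add: even_part_def mult.assoc mult.left_commute)

lemma bt_cong_even_part:
  assumes "fps_cong (Abs_fps (\<lambda>n. bt (k * n))) (eval_terms ts) 128"
    and "fps_cong (even_part (eval_terms ts)) (eval_terms us) 128"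
  shows "fps_cong (Abs_fps (\<lambda>n. bt (2 * k * n))) (eval_terms us) 128"
  unfolding bt_dilation_even_part using fps_cong_even_part[OF assms(1)] assms(2) by (rule fps_cong_trans)

lemma bt_cong_bt_terms:
  "fps_cong (Abs_fps (\<lambda>n. bt (4 * n))) (eval_terms bt_terms4) 128"
  "fps_cong (Abs_fps (\<lambda>n. bt (8 * n))) (eval_terms bt_terms8) 128"
  "fps_cong (Abs_fps (\<lambda>n. bt (16 * n))) (eval_terms bt_terms16) 128"
  "fps_cong (Abs_fps (\<lambda>n. bt (32 * n))) (eval_terms bt_terms32) 128"
proof -
  have "Abs_fps (\<lambda>n. bt (1 * n)) = eval_terms bt_terms1"
    by (simp add: fps_eq_iff bt_def bt_gf_eq)
  then have "fps_cong (Abs_fps (\<lambda>n. bt (1 * n))) (eval_terms bt_terms1) 128" by simp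
  from bt_cong_even_part[OF this even_part_bt_terms1]
  have "fps_cong (Abs_fps (\<lambda>n. bt (2 * n))) (eval_terms bt_terms2) 128" by simp
  from bt_cong_even_part[OF this even_part_bt_terms2]
  show 4: "fps_cong (Abs_fps (\<lambda>n. bt (4 * n))) (eval_terms bt_terms4) 128" by simp
  from bt_cong_even_part[OF 4 even_part_bt_terms4]
  show 8: "fps_cong (Abs_fps (\<lambda>n. bt (8 * n))) (eval_terms bt_terms8) 128" by simp
  from bt_cong_even_part[OF 8 even_part_bt_terms8]
  show 16: "fps_cong (Abs_fps (\<lambda>n. bt (16 * n))) (eval_terms bt_terms16) 128" by simp
  from bt_cong_even_part[OF 16 even_part_bt_terms16]
  show "fps_cong (Abs_fps (\<lambda>n. bt (32 * n))) (eval_terms bt_terms32) 128" by simp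
qed

theorem mainTheorem3:
  shows "fps_cong (Abs_fps (\<lambda>n. bt (4 * n)))
           (32 * fps_X * (f 2 ^ 47 / (f 1 ^ 50 * f 4 * f 8 ^ 2))
            + 56 * fps_X * (f 2 ^ 61 * f 8 ^ 2 / (f 1 ^ 54 * f 4 ^ 15))
            + f 2 ^ 71 / (f 1 ^ 58 * f 4 ^ 17 * f 8 ^ 2)) 128
       \<and> fps_cong (Abs_fps (\<lambda>n. bt (8 * n)))
           (32 * fps_X * (f 2 ^ 169 * f 8 ^ 2 / (f 1 ^ 126 * f 4 ^ 51))
            + 16 * fps_X * (f 2 ^ 155 / (f 1 ^ 122 * f 4 ^ 37 * f 8 ^ 2))
            + f 2 ^ 179 / (f 1 ^ 130 * f 4 ^ 53 * f 8 ^ 2)) 128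
       \<and> fps_cong (Abs_fps (\<lambda>n. bt (16 * n)))
           (96 * fps_X * (f 2 ^ 385 * f 8 ^ 2 / (f 1 ^ 270 * f 4 ^ 123))
            + f 2 ^ 395 / (f 1 ^ 274 * f 4 ^ 125 * f 8 ^ 2)) 128
       \<and> fps_cong (Abs_fps (\<lambda>n. bt (32 * n)))
           (96 * fps_X * (f 2 ^ 803 / (f 1 ^ 554 * f 4 ^ 253 * f 8 ^ 2))
            + 96 * fps_X * (f 2 ^ 817 * f 8 ^ 2 / (f 1 ^ 558 * f 4 ^ 267))
            + f 2 ^ 827 / (f 1 ^ 562 * f 4 ^ 269 * f 8 ^ 2)) 128"
  using bt_cong_bt_terms
  unfolding bt_terms4_def bt_terms8_def bt_terms16_def bt_terms32_def eta_quot_normalize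
  by (simp add: add.assoc)

end
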